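(* Let $\phi$ be a Drinfeld $A[\underline{t}_s]$-module over $\mathbb{T}_s$ of rank $r$ with $\phi_\theta=\theta+A_1\tau+\dots+A_r\tau^r$, $A_r\in\mathbb{T}_s^\times$. Then the de Rham module $H^*_{\mathrm{DR}}(\phi)=\mathrm{Der}(\phi)/\mathrm{Der}_{si}(\phi)$ is a free $\mathbb{T}_s$-module of rank $r$, with basis the classes of $\delta^0,\delta^1,\dots,\delta^{r-1}$, where $\delta^0_a=\phi_a-a$ for $a\in A[\underline{t}_s]$ and, for $1\le i\le r-1$, $\delta^i$ is the biderivation determined by $\delta^i_\theta=\tau^i$.
   Context: $\mathbb{F}_q$ finite field, $\theta,t_1,\dots,t_s$ independent variables, $A[\underline{t}_s]=\mathbb{F}_q[\theta,t_1,\dots,t_s]$, $\mathbb{F}_q[\underline{t}_s]=\mathbb{F}_q[t_1,\dots,t_s]$. $\mathbb{C}_\infty$: completion of an algebraic closure of $\mathbb{F}_q((1/\theta))$. $\mathbb{T}_s$: Tate algebra of power series in $t_1,\dots,t_s$ over $\mathbb{C}_\infty$ with coefficients tending to $0$. $\tau$ raises coefficients to the $q$-th power, $f^{(n)}=\tau^n(f)$; $\mathbb{T}_s[\tau]$ is the twisted polynomial ring with $\tau f=f^{(1)}\tau$. A Drinfeld $A[\underline{t}_s]$-module of rank $r$ is an $\mathbb{F}_q[\underline{t}_s]$-algebra homomorphism $\phi:A[\underline{t}_s]\to\mathbb{T}_s[\tau]$ with $\phi_\theta=\theta+A_1\tau+\dots+A_r\tau^r$, $A_r\ne0$. A biderivation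 is an $\mathbb{F}_q[\underline{t}_s]$-linear $\eta:A[\underline{t}_s]\to\tau\mathbb{T}_s[\tau]$ with $\eta_{ab}=a\eta_b+\eta_a\phi_b$ for all $a,b$; a biderivation is determined by $\eta_\theta$, and every element of $\tau\mathbb{T}_s[\tau]$ occurs as $\eta_\theta$. $\mathrm{Der}(\phi)$ is the left $\mathbb{T}_s$-module of biderivations, $(f\eta)_a=f\eta_a$. For $m\in\tau\mathbb{T}_s[\tau]$, $\eta^{\{m\}}_a=m\phi_a-am$ defines a strictly inner biderivation; $\mathrm{Der}_{si}(\phi)$ is the submodule of these. (Note $\delta^0=\eta^{\{1\}}$ is a biderivation but with $1\notin\tau\mathbb{T}_s[\tau]$.) *)

theory Defs
  imports "HOL-Computational_Algebra.Polynomial" "HOL-Computational_Algebra.Primes"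
begin

text \<open>C_infinity is the completion of an algebraic closure of F_q((1/theta)). We characterise it as:
  v a non-archimedean absolute value, 'c complete and algebraically closed, v theta > 1
  (so v restricts to the infinite place on F_q(theta)), and the elements algebraic over
  F_q[theta] are dense.\<close>

definition Fq :: "nat \<Rightarrow> 'c::field set" where
  "Fq q = {x. x ^ q = x}"

definition FqTheta :: "nat \<Rightarrow> 'c::field \<Rightarrow> 'c set" where
  "FqTheta q \<theta> = {poly p \<theta> | p. \<forall>i. coeff p i \<in> Fq q}"

definition is_C_infinity :: "nat \<Rightarrow> nat \<Rightarrow> 'c::field \<Rightarrow> ('c \<Rightarrow> real) \<Rightarrow> bool" where
  "is_C_infinity p q \<theta> v \<longleftrightarrow>
     prime p \<and> (\<exists>e>0. q = p ^ e) \<and> CHAR('c) = p \<and>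
     (\<forall>x. 0 \<le> v x) \<and> (\<forall>x. v x = 0 \<longleftrightarrow> x = 0) \<and>
     (\<forall>x y. v (x * y) = v x * v y) \<and> (\<forall>x y. v (x + y) \<le> max (v x) (v y)) \<and>
     (\<forall>X::nat \<Rightarrow> 'c. (\<forall>\<epsilon>>0. \<exists>N. \<forall>m\<ge>N. \<forall>n\<ge>N. v (X m - X n) < \<epsilon>) \<longrightarrow>
         (\<exists>L. \<forall>\<epsilon>>0. \<exists>N. \<forall>n\<ge>N. v (X n - L) < \<epsilon>)) \<and>
     (\<forall>P::'c poly. 0 < degree P \<longrightarrow> (\<exists>x. poly P x = 0)) \<and>
     1 < v \<theta> \<and>
     (\<forall>x. \<forall>\<epsilon>>0. \<exists>y. v (x - y) < \<epsilon> \<and>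
         (\<exists>P::'c poly. P \<noteq> 0 \<and> (\<forall>i. coeff P i \<in> FqTheta q \<theta>) \<and> poly P y = 0))"

text \<open>Elements of T_s: coefficient functions on multi-indices (nat => nat) supported in
  {..<s}, i.e. power series in t_0,...,t_{s-1}.\<close>

type_synonym 'c tate = "(nat \<Rightarrow> nat) \<Rightarrow> 'c"
type_synonym 'c tpoly = "nat \<Rightarrow> 'c tate"

definition mindex :: "nat \<Rightarrow> (nat \<Rightarrow> nat) set" where
  "mindex s = {\<alpha>. \<forall>i\<ge>s. \<alpha> i = 0}"

definition tate_alg :: "('c::field \<Rightarrow> real) \<Rightarrow> nat \<Rightarrow> 'c tate set" where
  "tate_alg v s = {f. (\<forall>\<alpha>. \<alpha> \<notin> mindex s \<longrightarrow> f \<alpha> = 0) \<and>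
                      (\<forall>\<epsilon>>0. finite {\<alpha>. \<epsilon> \<le> v (f \<alpha>)})}"

definition tzero :: "'c::field tate" where "tzero = (\<lambda>_. 0)"
definition tconst :: "'c::field \<Rightarrow> 'c tate" where
  "tconst c = (\<lambda>\<alpha>. if \<alpha> = (\<lambda>_. 0) then c else 0)"
definition tone :: "'c::field tate" where "tone = tconst 1"
definition tadd :: "'c::field tate \<Rightarrow> 'c tate \<Rightarrow> 'c tate" where
  "tadd f g = (\<lambda>\<alpha>. f \<alpha> + g \<alpha>)"
definition tmul :: "'c::field tate \<Rightarrow> 'c tate \<Rightarrow> 'c tate" where
  "tmul f g = (\<lambda>\<alpha>. \<Sum>\<beta>\<in>{\<beta>. \<forall>i. \<beta> i \<le> \<alpha> i}. f \<beta> * g (\<lambda>i. \<alpha> i - \<beta> i))"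
definition ttau :: "nat \<Rightarrow> 'c::field tate \<Rightarrow> 'c tate" where
  "ttau q f = (\<lambda>\<alpha>. f \<alpha> ^ q)"

definition tp_carrier :: "('c::field \<Rightarrow> real) \<Rightarrow> nat \<Rightarrow> 'c tpoly set" where
  "tp_carrier v s = {P. (\<forall>n. P n \<in> tate_alg v s) \<and> finite {n. P n \<noteq> tzero}}"
definition tp_tau_carrier :: "('c::field \<Rightarrow> real) \<Rightarrow> nat \<Rightarrow> 'c tpoly set" where
  "tp_tau_carrier v s = {P \<in> tp_carrier v s. P 0 = tzero}"
definition tp_zero :: "'c::field tpoly" where "tp_zero = (\<lambda>_. tzero)"
definition tp_const :: "'c::field tate \<Rightarrow> 'c tpoly" where
  "tp_const f = (\<lambda>n. if n = 0 then f else tzero)"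
definition tp_tau_pow :: "nat \<Rightarrow> 'c::field tpoly" where
  "tp_tau_pow i = (\<lambda>n. if n = i then tone else tzero)"
definition tp_add :: "'c::field tpoly \<Rightarrow> 'c tpoly \<Rightarrow> 'c tpoly" where
  "tp_add P Q = (\<lambda>n \<alpha>. P n \<alpha> + Q n \<alpha>)"
definition tp_sub :: "'c::field tpoly \<Rightarrow> 'c tpoly \<Rightarrow> 'c tpoly" where
  "tp_sub P Q = (\<lambda>n \<alpha>. P n \<alpha> - Q n \<alpha>)"
text \<open>(sum a_i tau^i)(sum b_j tau^j) = sum a_i b_j^(i) tau^(i+j)\<close>
definition tp_mul :: "nat \<Rightarrow> 'c::field tpoly \<Rightarrow> 'c tpoly \<Rightarrow> 'c tpoly" where
  "tp_mul q P Q = (\<lambda>n \<alpha>. \<Sum>i\<le>n. tmul (P i) ((ttau q ^^ i) (Q (n - i))) \<alpha>)"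

definition Fq_t :: "nat \<Rightarrow> nat \<Rightarrow> 'c::field tate set" where
  "Fq_t s q = {a. (\<forall>\<alpha>. \<alpha> \<notin> mindex s \<longrightarrow> a \<alpha> = 0) \<and> finite {\<alpha>. a \<alpha> \<noteq> 0} \<and>
                 (\<forall>\<alpha>. a \<alpha> \<in> Fq q)}"
definition A_t :: "nat \<Rightarrow> nat \<Rightarrow> 'c::field \<Rightarrow> 'c tate set" where
  "A_t s q \<theta> = {a. (\<forall>\<alpha>. \<alpha> \<notin> mindex s \<longrightarrow> a \<alpha> = 0) \<and> finite {\<alpha>. a \<alpha> \<noteq> 0} \<and>
                 (\<forall>\<alpha>. a \<alpha> \<in> FqTheta q \<theta>)}"

definition drinfeld_module ::
  "('c::field \<Rightarrow> real) \<Rightarrow> nat \<Rightarrow> nat \<Rightarrow> 'c \<Rightarrow> ('c tate \<Rightarrow> 'c tpoly) \<Rightarrow> nat \<Rightarrow> bool" where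
  "drinfeld_module v s q \<theta> \<phi> r \<longleftrightarrow>
     (\<forall>a\<in>A_t s q \<theta>. \<phi> a \<in> tp_carrier v s) \<and>
     (\<forall>a\<in>A_t s q \<theta>. \<forall>b\<in>A_t s q \<theta>. \<phi> (tadd a b) = tp_add (\<phi> a) (\<phi> b)) \<and>
     (\<forall>a\<in>A_t s q \<theta>. \<forall>b\<in>A_t s q \<theta>. \<phi> (tmul a b) = tp_mul q (\<phi> a) (\<phi> b)) \<and>
     (\<forall>c\<in>Fq_t s q. \<phi> c = tp_const c) \<and>
     1 \<le> r \<and> \<phi> (tconst \<theta>) 0 = tconst \<theta> \<and>
     (\<forall>i>r. \<phi> (tconst \<theta>) i = tzero) \<and> \<phi> (tconst \<theta>) r \<noteq> tzero"

definition Der ::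
  "('c::field \<Rightarrow> real) \<Rightarrow> nat \<Rightarrow> nat \<Rightarrow> 'c \<Rightarrow> ('c tate \<Rightarrow> 'c tpoly) \<Rightarrow> ('c tate \<Rightarrow> 'c tpoly) set" where
  "Der v s q \<theta> \<phi> = {\<eta>.
     (\<forall>a. a \<notin> A_t s q \<theta> \<longrightarrow> \<eta> a = tp_zero) \<and>
     (\<forall>a\<in>A_t s q \<theta>. \<eta> a \<in> tp_tau_carrier v s) \<and>
     (\<forall>a\<in>A_t s q \<theta>. \<forall>b\<in>A_t s q \<theta>. \<eta> (tadd a b) = tp_add (\<eta> a) (\<eta> b)) \<and>
     (\<forall>c\<in>Fq_t s q. \<forall>a\<in>A_t s q \<theta>. \<eta> (tmul c a) = tp_mul q (tp_const c) (\<eta> a)) \<and>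
     (\<forall>a\<in>A_t s q \<theta>. \<forall>b\<in>A_t s q \<theta>.
        \<eta> (tmul a b) = tp_add (tp_mul q (tp_const a) (\<eta> b)) (tp_mul q (\<eta> a) (\<phi> b)))}"

definition Der_si ::
  "('c::field \<Rightarrow> real) \<Rightarrow> nat \<Rightarrow> nat \<Rightarrow> 'c \<Rightarrow> ('c tate \<Rightarrow> 'c tpoly) \<Rightarrow> ('c tate \<Rightarrow> 'c tpoly) set" where
  "Der_si v s q \<theta> \<phi> = {\<eta>. \<exists>m\<in>tp_tau_carrier v s. \<forall>a.
      \<eta> a = (if a \<in> A_t s q \<theta> then tp_sub (tp_mul q m (\<phi> a)) (tp_mul q (tp_const a) m)
             else tp_zero)}"

definition delta0 :: "nat \<Rightarrow> nat \<Rightarrow> 'c::field \<Rightarrow> ('c tate \<Rightarrow> 'c tpoly) \<Rightarrow> 'c tate \<Rightarrow> 'c tpoly" where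
  "delta0 s q \<theta> \<phi> = (\<lambda>a. if a \<in> A_t s q \<theta> then tp_sub (\<phi> a) (tp_const a) else tp_zero)"

definition bd_sub :: "('c::field tate \<Rightarrow> 'c tpoly) \<Rightarrow> ('c tate \<Rightarrow> 'c tpoly) \<Rightarrow> 'c tate \<Rightarrow> 'c tpoly" where
  "bd_sub \<eta> \<zeta> = (\<lambda>a. tp_sub (\<eta> a) (\<zeta> a))"
definition bd_lincomb ::
  "nat \<Rightarrow> (nat \<Rightarrow> 'c::field tate) \<Rightarrow> (nat \<Rightarrow> 'c tate \<Rightarrow> 'c tpoly) \<Rightarrow> nat \<Rightarrow> 'c tate \<Rightarrow> 'c tpoly" where
  "bd_lincomb q c \<delta> r = (\<lambda>a n \<alpha>. \<Sum>i<r. tp_mul q (tp_const (c i)) (\<delta> i a) n \<alpha>)"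

end

theory Submission
  imports Defs
begin

text \<open>
  A biderivation \<open>\<eta>\<close> is determined by its value \<open>\<eta>\<^sub>\<theta>\<close>, because \<open>\<theta>\<close> generates \<open>A[t]\<close>
  over \<open>\<bbbF>\<^sub>q[t]\<close>; the strictly inner biderivation of \<open>m\<close> takes the value \<open>m \<phi>\<^sub>\<theta> - \<theta> m\<close>.
  As the leading coefficient of \<open>\<phi>\<^sub>\<theta>\<close> is a unit, the map \<open>m \<mapsto> m \<phi>\<^sub>\<theta> - \<theta> m\<close> raises the
  degree of every nonzero \<open>m \<in> \<tau>T\<^sub>s[\<tau>]\<close> by exactly \<open>r\<close>. Hence division with remainder reduces
  \<open>\<eta>\<^sub>\<theta>\<close> modulo strictly inner biderivations to degree at most \<open>r\<close>, and no nonzero strictly inner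
  biderivation has a value of degree at most \<open>r\<close> at \<open>\<theta>\<close>. The values \<open>\<phi>\<^sub>\<theta> - \<theta>\<close> of \<open>\<delta>\<^sup>0\<close>
  and \<open>\<tau>\<^sup>i\<close> of \<open>\<delta>\<^sup>i\<close> form a triangular basis of the elements of \<open>\<tau>T\<^sub>s[\<tau>]\<close> of degree
  at most \<open>r\<close>, so the classes of \<open>\<delta>\<^sup>0, \<dots>, \<delta>\<^sup>r\<^sup>-\<^sup>1\<close> span and are independent.
\<close>

section \<open>Multi-indices and the product of coefficient functions\<close>

definition below :: "(nat \<Rightarrow> nat) \<Rightarrow> (nat \<Rightarrow> nat) set" where
  "below \<alpha> = {\<beta>. \<forall>i. \<beta> i \<le> \<alpha> i}"

definition fin_supp :: "(nat \<Rightarrow> nat) \<Rightarrow> bool" where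
  "fin_supp \<alpha> \<longleftrightarrow> finite {i. \<alpha> i \<noteq> 0}"

text \<open>For a multi-index \<open>\<alpha>\<close> of infinite support, \<^const>\<open>tmul\<close> sums over the infinite set
  \<open>below \<alpha>\<close> and hence yields the junk value \<open>0\<close>; so \<^const>\<open>tone\<close> is neutral only for
  coefficient functions that vanish there.\<close>
definition finsupp_coeffs :: "'c::field tate \<Rightarrow> bool" where
  "finsupp_coeffs f \<longleftrightarrow> (\<forall>\<alpha>. \<not> fin_supp \<alpha> \<longrightarrow> f \<alpha> = 0)"

lemma tmul_below: "tmul f g \<alpha> = (\<Sum>\<beta>\<in>below \<alpha>. f \<beta> * g (\<lambda>i. \<alpha> i - \<beta> i))"
  by (simp add: tmul_def below_def)

lemma finite_below:
  assumes "fin_supp \<alpha>"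
  shows "finite (below \<alpha>)"
proof -
  let ?A = "{i. \<alpha> i \<noteq> 0}"
  let ?M = "Max (\<alpha> ` ?A)"
  have fin: "finite ?A" using assms by (simp add: fin_supp_def)
  have "below \<alpha> \<subseteq> {f. \<forall>x. (x \<in> ?A \<longrightarrow> f x \<in> {0..?M}) \<and> (x \<notin> ?A \<longrightarrow> f x = 0)}"
  proof
    fix \<beta> assume "\<beta> \<in> below \<alpha>"
    then have le: "\<beta> x \<le> \<alpha> x" for x by (simp add: below_def)
    have "\<beta> x \<le> ?M" if "x \<in> ?A" for x
      using le fin that by (meson Max_ge finite_imageI imageI order_trans)
    moreover have "\<beta> x = 0" if "x \<notin> ?A" for x
      using le[of x] that by simp
    ultimately show "\<beta> \<in> {f. \<forall>x. (x \<in> ?A \<longrightarrow> f x \<in> {0..?M}) \<and> (x \<notin> ?A \<longrightarrow> f x = 0)}"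
      by auto
  qed
  moreover have "finite {f. \<forall>x. (x \<in> ?A \<longrightarrow> f x \<in> {0..?M}) \<and> (x \<notin> ?A \<longrightarrow> f x = (0::nat))}"
    by (rule finite_set_of_finite_funs) (use fin in auto)
  ultimately show ?thesis by (rule finite_subset)
qed

lemma infinite_below:
  assumes "\<not> fin_supp \<alpha>"
  shows "infinite (below \<alpha>)"
proof
  assume fin: "finite (below \<alpha>)"
  define unit_at where "unit_at = (\<lambda>i j. if j = i then \<alpha> i else (0::nat))"
  have "inj_on unit_at {i. \<alpha> i \<noteq> 0}"
    by (rule inj_onI) (metis (mono_tags) mem_Collect_eq unit_at_def)
  moreover have "unit_at ` {i. \<alpha> i \<noteq> 0} \<subseteq> below \<alpha>"
    by (auto simp: below_def unit_at_def)
  ultimately have "finite {i. \<alpha> i \<noteq> 0}"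
    using fin by (metis finite_imageD finite_subset)
  with assms show False by (simp add: fin_supp_def)
qed

lemma tmul_infinite_supp: "\<not> fin_supp \<alpha> \<Longrightarrow> tmul f g \<alpha> = 0"
  by (simp add: tmul_below infinite_below)

lemma fin_supp_below:
  assumes "fin_supp \<alpha>" "\<beta> \<in> below \<alpha>"
  shows "fin_supp \<beta>"
proof -
  from assms(2) have "{i. \<beta> i \<noteq> 0} \<subseteq> {i. \<alpha> i \<noteq> 0}"
    by (auto simp: below_def) (metis less_le_trans)
  with assms(1) show ?thesis
    unfolding fin_supp_def by (rule finite_subset[rotated])
qed

lemma fin_supp_diff: "fin_supp \<alpha> \<Longrightarrow> fin_supp (\<lambda>i. \<alpha> i - \<beta> i)"
  unfolding fin_supp_def by (rule finite_subset[of _ "{i. \<alpha> i \<noteq> 0}"]) auto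

lemma finite_below_split:
  assumes "finite A" "finite B"
  shows "finite {\<alpha>. \<exists>\<beta>\<in>below \<alpha>. \<beta> \<in> A \<and> (\<lambda>i. \<alpha> i - \<beta> i) \<in> B}"
proof (rule finite_subset)
  show "{\<alpha>. \<exists>\<beta>\<in>below \<alpha>. \<beta> \<in> A \<and> (\<lambda>i. \<alpha> i - \<beta> i) \<in> B} \<subseteq> (\<lambda>(\<beta>, \<gamma>) i. \<beta> i + \<gamma> i) ` (A \<times> B)"
  proof
    fix \<alpha> assume "\<alpha> \<in> {\<alpha>. \<exists>\<beta>\<in>below \<alpha>. \<beta> \<in> A \<and> (\<lambda>i. \<alpha> i - \<beta> i) \<in> B}"
    then obtain \<beta> where "\<beta> \<in> below \<alpha>" "\<beta> \<in> A" "(\<lambda>i. \<alpha> i - \<beta> i) \<in> B" by blast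
    moreover from \<open>\<beta> \<in> below \<alpha>\<close> have "\<alpha> = (\<lambda>(\<beta>, \<gamma>) i. \<beta> i + \<gamma> i) (\<beta>, \<lambda>i. \<alpha> i - \<beta> i)"
      by (auto simp: below_def)
    ultimately show "\<alpha> \<in> (\<lambda>(\<beta>, \<gamma>) i. \<beta> i + \<gamma> i) ` (A \<times> B)"
      by (intro image_eqI) auto
  qed
  show "finite ((\<lambda>(\<beta>, \<gamma>) i. \<beta> i + \<gamma> i) ` (A \<times> B))"
    using assms by simp
qed

lemma tmul_commute: "tmul f g = tmul g f"
proof
  fix \<alpha>
  show "tmul f g \<alpha> = tmul g f \<alpha>"
  proof (cases "fin_supp \<alpha>")
    case True
    have diff_diff: "(\<lambda>i. \<alpha> i - (\<alpha> i - \<beta> i)) = \<beta>" if "\<beta> \<in> below \<alpha>" for \<beta>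
      using that by (intro ext) (simp add: below_def)
    have diff_below: "(\<lambda>i. \<alpha> i - \<beta> i) \<in> below \<alpha>" if "\<beta> \<in> below \<alpha>" for \<beta>
      by (simp add: below_def)
    show ?thesis unfolding tmul_below
      by (rule sum.reindex_bij_witness[of _ "\<lambda>\<beta> i. \<alpha> i - \<beta> i" "\<lambda>\<beta> i. \<alpha> i - \<beta> i"])
         (simp_all add: diff_diff diff_below mult.commute)
  qed (simp add: tmul_infinite_supp)
qed

lemma sum_below_below_reindex:
  assumes "fin_supp \<alpha>"
  shows "(\<Sum>\<beta>\<in>below \<alpha>. \<Sum>\<gamma>\<in>below \<beta>. F \<gamma> (\<lambda>i. \<beta> i - \<gamma> i) (\<lambda>i. \<alpha> i - \<beta> i))
       = (\<Sum>\<gamma>\<in>below \<alpha>. \<Sum>\<delta>\<in>below (\<lambda>i. \<alpha> i - \<gamma> i). F \<gamma> \<delta> (\<lambda>i. \<alpha> i - \<gamma> i - \<delta> i))"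
proof -
  have fin: "finite (below \<alpha>)" "\<And>\<beta>. \<beta> \<in> below \<alpha> \<Longrightarrow> finite (below \<beta>)"
    "\<And>\<gamma>. finite (below (\<lambda>i. \<alpha> i - \<gamma> i))"
    using assms fin_supp_below fin_supp_diff finite_below by blast+
  have "(\<Sum>\<beta>\<in>below \<alpha>. \<Sum>\<gamma>\<in>below \<beta>. F \<gamma> (\<lambda>i. \<beta> i - \<gamma> i) (\<lambda>i. \<alpha> i - \<beta> i))
      = (\<Sum>(\<beta>, \<gamma>)\<in>Sigma (below \<alpha>) below. F \<gamma> (\<lambda>i. \<beta> i - \<gamma> i) (\<lambda>i. \<alpha> i - \<beta> i))"
    by (rule sum.Sigma) (use fin in auto)
  also have "(\<Sum>(\<beta>, \<gamma>)\<in>Sigma (below \<alpha>) below. F \<gamma> (\<lambda>i. \<beta> i - \<gamma> i) (\<lambda>i. \<alpha> i - \<beta> i))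
      = (\<Sum>(\<gamma>, \<delta>)\<in>Sigma (below \<alpha>) (\<lambda>\<gamma>. below (\<lambda>i. \<alpha> i - \<gamma> i)). F \<gamma> \<delta> (\<lambda>i. \<alpha> i - \<gamma> i - \<delta> i))"
  proof (rule sum.reindex_bij_witness[of _ "\<lambda>(\<gamma>, \<delta>). (\<lambda>i. \<gamma> i + \<delta> i, \<gamma>)" "\<lambda>(\<beta>, \<gamma>). (\<gamma>, \<lambda>i. \<beta> i - \<gamma> i)"])
    fix x assume "x \<in> Sigma (below \<alpha>) below"
    then obtain \<beta> \<gamma> where x: "x = (\<beta>, \<gamma>)" "\<forall>i. \<beta> i \<le> \<alpha> i" "\<forall>i. \<gamma> i \<le> \<beta> i"
      by (auto simp: below_def)
    then show "(case case x of (\<beta>, \<gamma>) \<Rightarrow> (\<gamma>, \<lambda>i. \<beta> i - \<gamma> i) of (\<gamma>, \<delta>) \<Rightarrow> (\<lambda>i. \<gamma> i + \<delta> i, \<gamma>)) = x"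
      and "(case x of (\<beta>, \<gamma>) \<Rightarrow> (\<gamma>, \<lambda>i. \<beta> i - \<gamma> i)) \<in> Sigma (below \<alpha>) (\<lambda>\<gamma>. below (\<lambda>i. \<alpha> i - \<gamma> i))"
      by (auto simp: below_def intro!: ext intro: order_trans diff_le_mono)
    from x have "(\<lambda>i. \<alpha> i - \<gamma> i - (\<beta> i - \<gamma> i)) = (\<lambda>i. \<alpha> i - \<beta> i)"
      by (auto intro!: ext)
    with x show "(case case x of (\<beta>, \<gamma>) \<Rightarrow> (\<gamma>, \<lambda>i. \<beta> i - \<gamma> i) of (\<gamma>, \<delta>) \<Rightarrow> F \<gamma> \<delta> (\<lambda>i. \<alpha> i - \<gamma> i - \<delta> i))
        = (case x of (\<beta>, \<gamma>) \<Rightarrow> F \<gamma> (\<lambda>i. \<beta> i - \<gamma> i) (\<lambda>i. \<alpha> i - \<beta> i))"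
      by simp
  next
    fix y assume "y \<in> Sigma (below \<alpha>) (\<lambda>\<gamma>. below (\<lambda>i. \<alpha> i - \<gamma> i))"
    then obtain \<gamma> \<delta> where y: "y = (\<gamma>, \<delta>)" "\<forall>i. \<gamma> i \<le> \<alpha> i" "\<forall>i. \<delta> i \<le> \<alpha> i - \<gamma> i"
      by (auto simp: below_def)
    then show "(case case y of (\<gamma>, \<delta>) \<Rightarrow> (\<lambda>i. \<gamma> i + \<delta> i, \<gamma>) of (\<beta>, \<gamma>) \<Rightarrow> (\<gamma>, \<lambda>i. \<beta> i - \<gamma> i)) = y"
      by auto
    from y show "(case y of (\<gamma>, \<delta>) \<Rightarrow> (\<lambda>i. \<gamma> i + \<delta> i, \<gamma>)) \<in> Sigma (below \<alpha>) below"
      by (auto simp: below_def) (metis add.commute le_diff_conv2)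
  qed
  also have "\<dots> = (\<Sum>\<gamma>\<in>below \<alpha>. \<Sum>\<delta>\<in>below (\<lambda>i. \<alpha> i - \<gamma> i). F \<gamma> \<delta> (\<lambda>i. \<alpha> i - \<gamma> i - \<delta> i))"
    by (rule sum.Sigma[symmetric]) (use fin in auto)
  finally show ?thesis .
qed

lemma tmul_assoc: "tmul (tmul f g) h = tmul f (tmul g h)"
proof
  fix \<alpha>
  show "tmul (tmul f g) h \<alpha> = tmul f (tmul g h) \<alpha>"
  proof (cases "fin_supp \<alpha>")
    case True
    have "tmul (tmul f g) h \<alpha>
        = (\<Sum>\<beta>\<in>below \<alpha>. \<Sum>\<gamma>\<in>below \<beta>. f \<gamma> * (g (\<lambda>i. \<beta> i - \<gamma> i) * h (\<lambda>i. \<alpha> i - \<beta> i)))"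
      by (simp add: tmul_below sum_distrib_right mult.assoc)
    also have "\<dots> = (\<Sum>\<gamma>\<in>below \<alpha>. \<Sum>\<delta>\<in>below (\<lambda>i. \<alpha> i - \<gamma> i). f \<gamma> * (g \<delta> * h (\<lambda>i. \<alpha> i - \<gamma> i - \<delta> i)))"
      using True by (rule sum_below_below_reindex)
    also have "\<dots> = tmul f (tmul g h) \<alpha>"
      by (simp add: tmul_below sum_distrib_left)
    finally show ?thesis .
  qed (simp add: tmul_infinite_supp)
qed

lemma tmul_left_commute: "tmul f (tmul g h) = tmul g (tmul f h)"
  by (simp only: tmul_assoc[symmetric] tmul_commute[of f g])

lemma tmul_tzero [simp]: "tmul f tzero = tzero" "tmul tzero f = tzero"
  by (auto simp: tmul_def tzero_def)

lemma tmul_zero_fun [simp]: "tmul f (\<lambda>_. 0) = tzero" "tmul (\<lambda>_. 0) f = tzero"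
  by (auto simp: tmul_def tzero_def)

lemma tmul_diff_right: "tmul f (\<lambda>\<alpha>. g \<alpha> - h \<alpha>) = (\<lambda>\<alpha>. tmul f g \<alpha> - tmul f h \<alpha>)"
  by (auto simp: tmul_def right_diff_distrib sum_subtractf)

lemma tmul_diff_left: "tmul (\<lambda>\<alpha>. g \<alpha> - h \<alpha>) f = (\<lambda>\<alpha>. tmul g f \<alpha> - tmul h f \<alpha>)"
  by (metis (no_types) tmul_commute tmul_diff_right)

lemma tmul_sum_right: "tmul f (\<lambda>\<alpha>. \<Sum>i\<in>I. g i \<alpha>) = (\<lambda>\<alpha>. \<Sum>i\<in>I. tmul f (g i) \<alpha>)"
  unfolding tmul_def by (rule ext) (simp add: sum_distrib_left, rule sum.swap)

lemma tmul_sum_left: "tmul (\<lambda>\<alpha>. \<Sum>i\<in>I. g i \<alpha>) f = (\<lambda>\<alpha>. \<Sum>i\<in>I. tmul (g i) f \<alpha>)"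
  by (subst tmul_commute, subst tmul_sum_right) (simp add: tmul_commute)

lemma tmul_add_right: "tmul f (tadd g h) = tadd (tmul f g) (tmul f h)"
  by (auto simp: tmul_def tadd_def distrib_left sum.distrib)

lemma tmul_add_left: "tmul (tadd g h) f = tadd (tmul g f) (tmul h f)"
  by (metis tmul_commute tmul_add_right)

lemma tmul_tconst_left:
  assumes "finsupp_coeffs f"
  shows "tmul (tconst c) f = (\<lambda>\<alpha>. c * f \<alpha>)"
proof
  fix \<alpha>
  show "tmul (tconst c) f \<alpha> = c * f \<alpha>"
  proof (cases "fin_supp \<alpha>")
    case True
    have "tmul (tconst c) f \<alpha> = (\<Sum>\<beta>\<in>{\<lambda>_. 0}. tconst c \<beta> * f (\<lambda>i. \<alpha> i - \<beta> i))"
      unfolding tmul_below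
      by (rule sum.mono_neutral_right) (use finite_below[OF True] in \<open>auto simp: below_def tconst_def\<close>)
    then show ?thesis by (simp add: tconst_def)
  qed (use assms in \<open>simp add: tmul_infinite_supp finsupp_coeffs_def\<close>)
qed

lemma tmul_tone_left: "finsupp_coeffs f \<Longrightarrow> tmul tone f = f"
  by (simp add: tone_def tmul_tconst_left)

lemma tmul_tone_right: "finsupp_coeffs f \<Longrightarrow> tmul f tone = f"
  by (subst tmul_commute) (rule tmul_tone_left)

section \<open>The Tate algebra over a field with a non-archimedean absolute value\<close>

text \<open>Of the properties of \<open>\<bbbC>\<^sub>\<infinity>\<close> only these are used: the \<open>q\<close>-th power map is additive
  because \<open>q\<close> is a power of the characteristic, and \<open>v\<close> is a non-archimedean absolute value.\<close>
locale frobenius_absval =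
  fixes v :: "'c::field \<Rightarrow> real" and q :: nat
  assumes q_pos: "0 < q"
    and power_q_add: "\<And>x y::'c. (x + y) ^ q = x ^ q + y ^ q"
    and v_nonneg: "\<And>x. 0 \<le> v x"
    and v_eq_0_iff: "\<And>x. v x = 0 \<longleftrightarrow> x = 0"
    and v_mult: "\<And>x y. v (x * y) = v x * v y"
    and v_add_le_max: "\<And>x y. v (x + y) \<le> max (v x) (v y)"
begin

lemma zero_power_q [simp]: "(0::'c) ^ q = 0"
  using q_pos by simp

lemma power_q_minus: "(- x :: 'c) ^ q = - (x ^ q)"
proof -
  have "(- x + x) ^ q = (- x) ^ q + x ^ q" by (rule power_q_add)
  then show ?thesis by (simp add: eq_neg_iff_add_eq_0)
qed

lemma power_q_diff: "(x - y :: 'c) ^ q = x ^ q - y ^ q"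
  using power_q_add[of x "- y"] by (simp add: power_q_minus)

lemma power_q_sum: "(\<Sum>i\<in>I. f i :: 'c) ^ q = (\<Sum>i\<in>I. f i ^ q)"
  using q_pos by (induction I rule: infinite_finite_induct) (simp_all add: power_q_add)

lemma v_zero [simp]: "v 0 = 0"
  by (simp add: v_eq_0_iff)

lemma v_one: "v 1 = 1"
proof -
  have "v 1 = v 1 * v 1" using v_mult[of 1 1] by simp
  moreover have "v 1 \<noteq> 0" by (simp add: v_eq_0_iff)
  ultimately show ?thesis by (metis mult_cancel_right1)
qed

lemma v_minus: "v (- x) = v x"
proof -
  have "(v (-1) - 1) * (v (-1) + 1) = 0"
    using v_mult[of "-1" "-1"] v_one by (simp add: algebra_simps)
  moreover have "v (-1) + 1 \<noteq> 0" using v_nonneg[of "-1"] by linarith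
  ultimately have "v (-1) = 1" by simp
  then show ?thesis using v_mult[of "-1" x] by simp
qed

lemma v_diff_le_max: "v (x - y) \<le> max (v x) (v y)"
  using v_add_le_max[of x "- y"] by (simp add: v_minus)

lemma v_power: "v (x ^ n) = v x ^ n"
  by (induction n) (simp_all add: v_one v_mult)

lemma v_sum_less:
  assumes "finite I" "0 < e" "\<And>i. i \<in> I \<Longrightarrow> v (f i) < e"
  shows "v (\<Sum>i\<in>I. f i) < e"
  using assms
proof (induction I rule: finite_induct)
  case (insert x F)
  then have "max (v (f x)) (v (sum f F)) < e" by simp
  with insert.hyps show ?case
    by (simp add: le_less_trans[OF v_add_le_max])
qed simp

lemma ttau_tmul: "ttau q (tmul (f::'c tate) g) = tmul (ttau q f) (ttau q g)"
  by (rule ext) (simp add: ttau_def tmul_below power_q_sum power_mult_distrib)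

lemma ttau_tadd: "ttau q (tadd (f::'c tate) g) = tadd (ttau q f) (ttau q g)"
  by (rule ext) (simp add: ttau_def tadd_def power_q_add)

lemma ttau_diff: "ttau q (\<lambda>\<alpha>. (f::'c tate) \<alpha> - g \<alpha>) = (\<lambda>\<alpha>. ttau q f \<alpha> - ttau q g \<alpha>)"
  by (rule ext) (simp add: ttau_def power_q_diff)

lemma ttau_sum: "ttau q (\<lambda>\<alpha>. \<Sum>i\<in>I. (g i \<alpha>::'c)) = (\<lambda>\<alpha>. \<Sum>i\<in>I. ttau q (g i) \<alpha>)"
  by (rule ext) (simp add: ttau_def power_q_sum)

lemma ttau_tzero [simp]: "ttau q (tzero::'c tate) = tzero"
  by (simp add: ttau_def tzero_def)

lemma ttau_tone [simp]: "ttau q (tone::'c tate) = tone"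
  by (rule ext) (simp add: ttau_def tone_def tconst_def)

lemma funpow_ttau_tmul: "(ttau q ^^ k) (tmul (f::'c tate) g) = tmul ((ttau q ^^ k) f) ((ttau q ^^ k) g)"
  by (induction k) (simp_all add: ttau_tmul)

lemma funpow_ttau_tadd: "(ttau q ^^ k) (tadd (f::'c tate) g) = tadd ((ttau q ^^ k) f) ((ttau q ^^ k) g)"
  by (induction k) (simp_all add: ttau_tadd)

lemma funpow_ttau_diff:
  "(ttau q ^^ k) (\<lambda>\<alpha>. (f::'c tate) \<alpha> - g \<alpha>) = (\<lambda>\<alpha>. (ttau q ^^ k) f \<alpha> - (ttau q ^^ k) g \<alpha>)"
  by (induction k) (simp_all add: ttau_diff)

lemma funpow_ttau_sum:
  "(ttau q ^^ k) (\<lambda>\<alpha>. \<Sum>i\<in>I. (g i \<alpha>::'c)) = (\<lambda>\<alpha>. \<Sum>i\<in>I. (ttau q ^^ k) (g i) \<alpha>)"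
  by (induction k) (simp_all add: ttau_sum)

lemma funpow_ttau_tzero [simp]: "(ttau q ^^ k) (tzero::'c tate) = tzero"
  by (induction k) simp_all

lemma funpow_ttau_tone [simp]: "(ttau q ^^ k) (tone::'c tate) = tone"
  by (induction k) simp_all

lemma tate_algI:
  "(\<And>\<alpha>. \<alpha> \<notin> mindex s \<Longrightarrow> f \<alpha> = 0) \<Longrightarrow> (\<And>e. 0 < e \<Longrightarrow> finite {\<alpha>. e \<le> v (f \<alpha>)})
    \<Longrightarrow> f \<in> tate_alg v s"
  by (simp add: tate_alg_def)

lemma tate_alg_finite: "f \<in> tate_alg v s \<Longrightarrow> 0 < e \<Longrightarrow> finite {\<alpha>. e \<le> v (f \<alpha>)}"
  by (simp add: tate_alg_def)

lemma tate_alg_outside: "f \<in> tate_alg v s \<Longrightarrow> \<alpha> \<notin> mindex s \<Longrightarrow> f \<alpha> = 0"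
  by (simp add: tate_alg_def)

lemma fin_supp_mindex: "\<alpha> \<in> mindex s \<Longrightarrow> fin_supp \<alpha>"
  unfolding fin_supp_def mindex_def
  by (rule finite_subset[of _ "{..<s}"]) (auto simp: not_less[symmetric])

lemma zero_in_mindex: "(\<lambda>_. 0) \<in> mindex s"
  by (simp add: mindex_def)

lemma tate_alg_finsupp_coeffs: "f \<in> tate_alg v s \<Longrightarrow> finsupp_coeffs f"
  using fin_supp_mindex by (auto simp: finsupp_coeffs_def tate_alg_def)

lemma tate_alg_tconst [simp]: "tconst c \<in> tate_alg v s"
proof (rule tate_algI)
  show "tconst c \<alpha> = 0" if "\<alpha> \<notin> mindex s" for \<alpha>
    using that zero_in_mindex by (auto simp: tconst_def)
  show "finite {\<alpha>. e \<le> v (tconst c \<alpha>)}" if "0 < e" for e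
    by (rule finite_subset[of _ "{\<lambda>_. 0}"]) (use that in \<open>auto simp: tconst_def\<close>)
qed

lemma tate_alg_tzero [simp]: "tzero \<in> tate_alg v s"
  using tate_alg_tconst[of 0 s] by (simp add: tconst_def tzero_def)

lemma tate_alg_tone [simp]: "tone \<in> tate_alg v s"
  by (simp add: tone_def)

lemma tate_alg_dominated:
  assumes "f \<in> tate_alg v s" "g \<in> tate_alg v s" "\<And>\<alpha>. v (h \<alpha>) \<le> max (v (f \<alpha>)) (v (g \<alpha>))"
  shows "h \<in> tate_alg v s"
proof (rule tate_algI)
  show "h \<alpha> = 0" if "\<alpha> \<notin> mindex s" for \<alpha>
    using assms(3)[of \<alpha>] v_nonneg[of "h \<alpha>"] that
    by (simp add: tate_alg_outside[OF assms(1)] tate_alg_outside[OF assms(2)] v_eq_0_iff)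
  show "finite {\<alpha>. e \<le> v (h \<alpha>)}" if "0 < e" for e
  proof (rule finite_subset)
    show "{\<alpha>. e \<le> v (h \<alpha>)} \<subseteq> {\<alpha>. e \<le> v (f \<alpha>)} \<union> {\<alpha>. e \<le> v (g \<alpha>)}"
    proof
      fix \<alpha> assume "\<alpha> \<in> {\<alpha>. e \<le> v (h \<alpha>)}"
      with assms(3)[of \<alpha>] have "e \<le> max (v (f \<alpha>)) (v (g \<alpha>))" by simp
      then show "\<alpha> \<in> {\<alpha>. e \<le> v (f \<alpha>)} \<union> {\<alpha>. e \<le> v (g \<alpha>)}"
        by (auto simp: le_max_iff_disj)
    qed
    show "finite ({\<alpha>. e \<le> v (f \<alpha>)} \<union> {\<alpha>. e \<le> v (g \<alpha>)})"
      using assms(1,2) that tate_alg_finite by blast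
  qed
qed

lemma tate_alg_tadd: "f \<in> tate_alg v s \<Longrightarrow> g \<in> tate_alg v s \<Longrightarrow> tadd f g \<in> tate_alg v s"
  by (rule tate_alg_dominated[of f _ g]) (simp_all add: tadd_def v_add_le_max)

lemma tate_alg_diff:
  "f \<in> tate_alg v s \<Longrightarrow> g \<in> tate_alg v s \<Longrightarrow> (\<lambda>\<alpha>. f \<alpha> - g \<alpha>) \<in> tate_alg v s"
  by (rule tate_alg_dominated[of f _ g]) (simp_all add: v_diff_le_max)

lemma tate_alg_sum:
  "finite I \<Longrightarrow> (\<And>i. i \<in> I \<Longrightarrow> g i \<in> tate_alg v s) \<Longrightarrow> (\<lambda>\<alpha>. \<Sum>i\<in>I. g i \<alpha>) \<in> tate_alg v s"
proof (induction I rule: finite_induct)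
  case empty
  then show ?case using tate_alg_tzero by (simp add: tzero_def)
next
  case (insert x F)
  then have "tadd (g x) (\<lambda>\<alpha>. \<Sum>i\<in>F. g i \<alpha>) \<in> tate_alg v s"
    by (simp add: tate_alg_tadd)
  with insert show ?case by (simp add: tadd_def)
qed

lemma tate_alg_ttau:
  assumes "f \<in> tate_alg v s"
  shows "ttau q f \<in> tate_alg v s"
proof (rule tate_algI)
  show "ttau q f \<alpha> = 0" if "\<alpha> \<notin> mindex s" for \<alpha>
    using that assms q_pos by (simp add: tate_alg_outside ttau_def)
  show "finite {\<alpha>. e \<le> v (ttau q f \<alpha>)}" if "0 < e" for e
  proof (rule finite_subset)
    have "e \<le> v (f \<alpha>) ^ q \<Longrightarrow> min 1 e \<le> v (f \<alpha>)" for \<alpha>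
      using power_le_one[OF v_nonneg, of "f \<alpha>" q] power_decreasing[of 1 q "v (f \<alpha>)"] q_pos
        v_nonneg[of "f \<alpha>"] by (cases "v (f \<alpha>) < 1") auto
    then show "{\<alpha>. e \<le> v (ttau q f \<alpha>)} \<subseteq> {\<alpha>. min 1 e \<le> v (f \<alpha>)}"
      by (auto simp: ttau_def v_power)
    show "finite {\<alpha>. min 1 e \<le> v (f \<alpha>)}"
      using assms that by (intro tate_alg_finite) auto
  qed
qed

lemma tate_alg_funpow_ttau: "f \<in> tate_alg v s \<Longrightarrow> (ttau q ^^ k) f \<in> tate_alg v s"
  by (induction k) (simp_all add: tate_alg_ttau)

lemma tate_alg_bounded:
  assumes "f \<in> tate_alg v s"
  obtains M where "0 < M" "\<And>\<alpha>. v (f \<alpha>) \<le> M"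
proof -
  let ?S = "{\<alpha>. 1 \<le> v (f \<alpha>)}"
  define M where "M = Max (insert 1 ((\<lambda>\<alpha>. v (f \<alpha>)) ` ?S))"
  have fin: "finite ?S" using assms by (intro tate_alg_finite) auto
  have one_le: "1 \<le> M" unfolding M_def using fin by (intro Max_ge) auto
  have "v (f \<alpha>) \<le> M" for \<alpha>
  proof (cases "1 \<le> v (f \<alpha>)")
    case True
    then show ?thesis unfolding M_def using fin by (intro Max_ge) auto
  qed (use one_le in simp)
  with one_le show ?thesis by (intro that[of M]) auto
qed

lemma tmul_large_coeff:
  assumes "0 < e" "e \<le> v (tmul f g \<alpha>)"
  shows "\<exists>\<beta>\<in>below \<alpha>. e \<le> v (f \<beta>) * v (g (\<lambda>i. \<alpha> i - \<beta> i))"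
proof -
  have "fin_supp \<alpha>"
  proof (rule ccontr)
    assume "\<not> fin_supp \<alpha>"
    then have "tmul f g \<alpha> = 0" by (rule tmul_infinite_supp)
    with assms show False by simp
  qed
  then show ?thesis
    using assms v_sum_less[OF finite_below, of \<alpha> e "\<lambda>\<beta>. f \<beta> * g (\<lambda>i. \<alpha> i - \<beta> i)"]
    by (force simp: tmul_below v_mult not_le[symmetric])
qed

lemma tate_alg_tmul:
  assumes f: "f \<in> tate_alg v s" and g: "g \<in> tate_alg v s"
  shows "tmul f g \<in> tate_alg v s"
proof (rule tate_algI)
  show "tmul f g \<alpha> = 0" if "\<alpha> \<notin> mindex s" for \<alpha>
    unfolding tmul_below
  proof (rule sum.neutral, rule ballI)
    fix \<beta> assume "\<beta> \<in> below \<alpha>"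
    from that obtain i where "s \<le> i" "\<alpha> i \<noteq> 0" by (auto simp: mindex_def)
    then have "\<beta> \<notin> mindex s \<or> (\<lambda>i. \<alpha> i - \<beta> i) \<notin> mindex s"
      by (auto simp: mindex_def)
    then show "f \<beta> * g (\<lambda>i. \<alpha> i - \<beta> i) = 0"
      using f g by (auto simp: tate_alg_outside)
  qed
  show "finite {\<alpha>. e \<le> v (tmul f g \<alpha>)}" if "0 < e" for e
  proof -
    obtain Mf where Mf: "0 < Mf" "\<And>\<alpha>. v (f \<alpha>) \<le> Mf" using tate_alg_bounded[OF f] by blast
    obtain Mg where Mg: "0 < Mg" "\<And>\<alpha>. v (g \<alpha>) \<le> Mg" using tate_alg_bounded[OF g] by blast
    let ?A = "{\<beta>. e / Mg \<le> v (f \<beta>)}" and ?B = "{\<gamma>. e / Mf \<le> v (g \<gamma>)}"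
    have "{\<alpha>. e \<le> v (tmul f g \<alpha>)} \<subseteq> {\<alpha>. \<exists>\<beta>\<in>below \<alpha>. \<beta> \<in> ?A \<and> (\<lambda>i. \<alpha> i - \<beta> i) \<in> ?B}"
    proof safe
      fix \<alpha> assume "e \<le> v (tmul f g \<alpha>)"
      then obtain \<beta> where "\<beta> \<in> below \<alpha>" and large: "e \<le> v (f \<beta>) * v (g (\<lambda>i. \<alpha> i - \<beta> i))"
        using tmul_large_coeff \<open>0 < e\<close> by blast
      moreover have "e \<le> v (f \<beta>) * Mg" "e \<le> Mf * v (g (\<lambda>i. \<alpha> i - \<beta> i))"
        using large Mf Mg v_nonneg by (meson mult_left_mono mult_right_mono order_trans)+
      ultimately show "\<exists>\<beta>\<in>below \<alpha>. \<beta> \<in> ?A \<and> (\<lambda>i. \<alpha> i - \<beta> i) \<in> ?B"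
        using Mf(1) Mg(1) by (auto simp: divide_le_eq mult.commute)
    qed
    moreover have "finite ?A" "finite ?B"
      using f g Mf Mg \<open>0 < e\<close> by (auto intro!: tate_alg_finite)
    ultimately show ?thesis
      using finite_below_split finite_subset by blast
  qed
qed

end

section \<open>Twisted polynomials\<close>

definition tp_monom :: "'c::field tate \<Rightarrow> nat \<Rightarrow> 'c tpoly" where
  "tp_monom c k = (\<lambda>n. if n = k then c else tzero)"

definition tp_degree_le :: "'c::field tpoly \<Rightarrow> nat \<Rightarrow> bool" where
  "tp_degree_le P d \<longleftrightarrow> (\<forall>n>d. P n = tzero)"

lemma tzero_apply [simp]: "tzero \<alpha> = 0"
  by (simp add: tzero_def)

lemma tp_zero_apply [simp]: "tp_zero n = tzero"
  by (simp add: tp_zero_def)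

lemma tp_mul_apply: "tp_mul q P Q n = (\<lambda>\<alpha>. \<Sum>i\<le>n. tmul (P i) ((ttau q ^^ i) (Q (n - i))) \<alpha>)"
  by (simp add: tp_mul_def)

lemma tp_mul_0: "tp_mul q P Q 0 = tmul (P 0) (Q 0)"
  by (simp add: tp_mul_def)

lemma tp_add_tp_zero [simp]: "tp_add tp_zero tp_zero = tp_zero"
  by (simp add: tp_add_def tp_zero_def tzero_def)

lemma tp_sub_tp_zero [simp]: "tp_sub P tp_zero = P"
  by (simp add: tp_sub_def tp_zero_def)

lemma tp_mul_zero_left [simp]: "tp_mul q tp_zero P = tp_zero"
  by (rule ext)+ (simp add: tp_mul_def tp_zero_def)

lemma tp_mul_tp_monom_left:
  "tp_mul q (tp_monom c k) P n = (if k \<le> n then tmul c ((ttau q ^^ k) (P (n - k))) else tzero)"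
proof (cases "k \<le> n")
  case True
  have "tp_mul q (tp_monom c k) P n
      = (\<lambda>\<alpha>. \<Sum>i\<in>{k}. tmul (tp_monom c k i) ((ttau q ^^ i) (P (n - i))) \<alpha>)"
    unfolding tp_mul_apply
    by (rule ext, rule sum.mono_neutral_right) (use True in \<open>auto simp: tp_monom_def\<close>)
  with True show ?thesis by (simp add: tp_monom_def)
next
  case False
  then show ?thesis
    by (auto simp: tp_mul_apply tp_monom_def intro!: ext sum.neutral)
qed

lemma tp_mul_const_left: "tp_mul q (tp_const c) P n = tmul c (P n)"
  using tp_mul_tp_monom_left[of q c 0 P n] by (simp add: tp_monom_def tp_const_def)

lemma tp_mul_add_left: "tp_mul q (tp_add P Q) R = tp_add (tp_mul q P R) (tp_mul q Q R)"
  by (rule ext)+ (simp add: tp_mul_def tp_add_def tmul_add_left[unfolded tadd_def] sum.distrib)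

lemma tp_mul_sub_left: "tp_mul q (tp_sub P Q) R = tp_sub (tp_mul q P R) (tp_mul q Q R)"
  by (rule ext)+ (simp add: tp_mul_def tp_sub_def tmul_diff_left sum_subtractf)

lemma tp_const_tadd: "tp_const (tadd a b) = tp_add (tp_const a) (tp_const b)"
  by (rule ext)+ (simp add: tp_const_def tp_add_def tadd_def)

lemma tp_mul_tone_left: "(\<And>n. finsupp_coeffs (X n)) \<Longrightarrow> tp_mul q (tp_const tone) X = X"
  by (rule ext) (simp add: tp_mul_const_left tmul_tone_left)

lemma tp_carrierI:
  assumes "\<And>n. P n \<in> tate_alg v s" "\<And>n. N < n \<Longrightarrow> P n = tzero"
  shows "P \<in> tp_carrier v s"
proof -
  have "{n. P n \<noteq> tzero} \<subseteq> {..N}"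
    using assms(2) by (auto simp: not_less[symmetric])
  with assms(1) show ?thesis
    by (auto simp: tp_carrier_def intro: finite_subset)
qed

lemma tp_carrier_coeff: "P \<in> tp_carrier v s \<Longrightarrow> P n \<in> tate_alg v s"
  by (simp add: tp_carrier_def)

lemma tp_carrier_degree:
  assumes "P \<in> tp_carrier v s"
  obtains N where "\<And>n. N < n \<Longrightarrow> P n = tzero"
proof -
  from assms have "finite {n. P n \<noteq> tzero}" by (simp add: tp_carrier_def)
  then obtain N where "\<forall>n\<in>{n. P n \<noteq> tzero}. n \<le> N"
    unfolding finite_nat_set_iff_bounded_le by blast
  then have "P n = tzero" if "N < n" for n
    using that by (meson mem_Collect_eq not_le)
  then show ?thesis by (rule that)
qed

lemma tp_tau_carrierI: "P \<in> tp_carrier v s \<Longrightarrow> P 0 = tzero \<Longrightarrow> P \<in> tp_tau_carrier v s"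
  by (simp add: tp_tau_carrier_def)

lemma tp_tau_carrierD:
  "P \<in> tp_tau_carrier v s \<Longrightarrow> P \<in> tp_carrier v s"
  "P \<in> tp_tau_carrier v s \<Longrightarrow> P 0 = tzero"
  by (simp_all add: tp_tau_carrier_def)

context frobenius_absval
begin

lemma tp_mul_const_right: "tp_mul q P (tp_const c) n = tmul (P n) ((ttau q ^^ n) (c::'c tate))"
proof -
  have "tp_mul q P (tp_const c) n = (\<lambda>\<alpha>. \<Sum>i\<in>{n}. tmul (P i) ((ttau q ^^ i) (tp_const c (n - i))) \<alpha>)"
    unfolding tp_mul_apply
    by (rule ext, rule sum.mono_neutral_right) (auto simp: tp_const_def)
  then show ?thesis by (simp add: tp_const_def)
qed

lemma tp_const_tmul: "tp_const (tmul a b) = tp_mul q (tp_const a) (tp_const (b::'c tate))"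
  by (rule ext, subst tp_mul_const_left) (simp add: tp_const_def)

lemma tp_mul_tone_right: "(\<And>n. finsupp_coeffs ((X::'c tpoly) n)) \<Longrightarrow> tp_mul q X (tp_const tone) = X"
  by (rule ext) (simp add: tp_mul_const_right tmul_tone_right)

lemma tp_mul_zero_right [simp]: "tp_mul q P (tp_zero::'c tpoly) = tp_zero"
  by (rule ext)+ (simp add: tp_mul_def tp_zero_def)

lemma tp_mul_add_right:
  "tp_mul q P (tp_add Q R) = tp_add (tp_mul q P Q) (tp_mul q P (R::'c tpoly))"
  by (rule ext)+
    (simp add: tp_mul_def tp_add_def funpow_ttau_tadd[unfolded tadd_def]
      tmul_add_right[unfolded tadd_def] sum.distrib)

lemma tp_mul_sub_right:
  "tp_mul q P (tp_sub Q R) = tp_sub (tp_mul q P Q) (tp_mul q P (R::'c tpoly))"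
  by (rule ext)+ (simp add: tp_mul_def tp_sub_def funpow_ttau_diff tmul_diff_right sum_subtractf)

lemma tp_mul_assoc: "tp_mul q (tp_mul q P Q) R = tp_mul q P (tp_mul q Q (R::'c tpoly))"
proof (rule ext, rule ext)
  fix n \<alpha>
  define F where "F = (\<lambda>j l. tmul (tmul (P j) ((ttau q ^^ j) (Q l)))
                              ((ttau q ^^ (j + l)) (R (n - (j + l)))) \<alpha>)"
  have "tp_mul q (tp_mul q P Q) R n \<alpha>
      = (\<Sum>i\<le>n. \<Sum>j\<le>i. tmul (tmul (P j) ((ttau q ^^ j) (Q (i - j)))) ((ttau q ^^ i) (R (n - i))) \<alpha>)"
    by (simp add: tp_mul_apply tmul_sum_left)
  also have "\<dots> = (\<Sum>i\<le>n. \<Sum>j\<le>i. F j (i - j))"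
    by (intro sum.cong refl) (simp add: F_def)
  also have "\<dots> = (\<Sum>(j, l)\<in>{(j, l). j + l \<le> n}. F j l)"
    by (rule sum.triangle_reindex_eq[symmetric])
  also have "{(j, l). j + l \<le> n} = Sigma {..n} (\<lambda>j. {..n - j})"
    by auto
  also have "(\<Sum>(j, l)\<in>Sigma {..n} (\<lambda>j. {..n - j}). F j l) = (\<Sum>j\<le>n. \<Sum>l\<le>n - j. F j l)"
    by (rule sum.Sigma[symmetric]) auto
  also have "\<dots> = (\<Sum>j\<le>n. \<Sum>l\<le>n - j.
      tmul (P j) (tmul ((ttau q ^^ j) (Q l)) ((ttau q ^^ j) ((ttau q ^^ l) (R (n - j - l))))) \<alpha>)"
    by (intro sum.cong refl) (simp add: F_def tmul_assoc funpow_add)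
  also have "\<dots> = tp_mul q P (tp_mul q Q R) n \<alpha>"
    by (simp add: tp_mul_apply funpow_ttau_sum funpow_ttau_tmul tmul_sum_right)
  finally show "tp_mul q (tp_mul q P Q) R n \<alpha> = tp_mul q P (tp_mul q Q R) n \<alpha>" .
qed

lemma tp_mul_coeff_top:
  assumes "\<And>i. K < i \<Longrightarrow> m i = tzero" "\<And>j. d < j \<Longrightarrow> (P::'c tpoly) j = tzero"
  shows "tp_mul q m P (K + d) = tmul (m K) ((ttau q ^^ K) (P d))"
proof -
  have "tp_mul q m P (K + d) = (\<lambda>\<alpha>. \<Sum>i\<in>{K}. tmul (m i) ((ttau q ^^ i) (P (K + d - i))) \<alpha>)"
    unfolding tp_mul_apply
  proof (rule ext, rule sum.mono_neutral_right)
    fix \<alpha>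
    show "\<forall>i\<in>{..K + d} - {K}. tmul (m i) ((ttau q ^^ i) (P (K + d - i))) \<alpha> = 0"
    proof
      fix i assume "i \<in> {..K + d} - {K}"
      then consider "K < i" | "d < K + d - i" by fastforce
      then show "tmul (m i) ((ttau q ^^ i) (P (K + d - i))) \<alpha> = 0"
        by cases (simp_all add: assms)
    qed
  qed auto
  then show ?thesis by simp
qed

lemma tate_alg_tp_mul_coeff:
  "P \<in> tp_carrier v s \<Longrightarrow> Q \<in> tp_carrier v s \<Longrightarrow> tp_mul q P Q n \<in> tate_alg v s"
  unfolding tp_mul_apply
  by (intro tate_alg_sum tate_alg_tmul tate_alg_funpow_ttau tp_carrier_coeff) auto

lemma tp_carrier_tp_mul:
  assumes P: "P \<in> tp_carrier v s" and Q: "Q \<in> tp_carrier v s"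
  shows "tp_mul q P Q \<in> tp_carrier v s"
proof -
  obtain M where M: "\<And>n. M < n \<Longrightarrow> P n = tzero" using tp_carrier_degree[OF P] by blast
  obtain N where N: "\<And>n. N < n \<Longrightarrow> Q n = tzero" using tp_carrier_degree[OF Q] by blast
  have "tp_mul q P Q n = tzero" if "M + N < n" for n
  proof -
    have "tmul (P i) ((ttau q ^^ i) (Q (n - i))) = tzero" for i
      using M[of i] N[of "n - i"] that by (cases "M < i") auto
    then show ?thesis by (simp add: tp_mul_apply tzero_def)
  qed
  then show ?thesis
    by (rule tp_carrierI[OF tate_alg_tp_mul_coeff[OF P Q]])
qed

lemma tp_carrier_tp_add:
  assumes P: "P \<in> tp_carrier v s" and Q: "Q \<in> tp_carrier v s"
  shows "tp_add P Q \<in> tp_carrier v s"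
proof -
  obtain M where M: "\<And>n. M < n \<Longrightarrow> P n = tzero" using tp_carrier_degree[OF P] by blast
  obtain N where N: "\<And>n. N < n \<Longrightarrow> Q n = tzero" using tp_carrier_degree[OF Q] by blast
  show ?thesis
    using M N tate_alg_tadd[OF tp_carrier_coeff[OF P] tp_carrier_coeff[OF Q]]
    by (intro tp_carrierI[of _ _ _ "max M N"]) (auto simp: tp_add_def tadd_def tzero_def)
qed

lemma tp_carrier_tp_sub:
  assumes P: "P \<in> tp_carrier v s" and Q: "Q \<in> tp_carrier v s"
  shows "tp_sub P Q \<in> tp_carrier v s"
proof -
  obtain M where M: "\<And>n. M < n \<Longrightarrow> P n = tzero" using tp_carrier_degree[OF P] by blast
  obtain N where N: "\<And>n. N < n \<Longrightarrow> Q n = tzero" using tp_carrier_degree[OF Q] by blast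
  show ?thesis
    using M N tate_alg_diff[OF tp_carrier_coeff[OF P] tp_carrier_coeff[OF Q]]
    by (intro tp_carrierI[of _ _ _ "max M N"]) (auto simp: tp_sub_def tzero_def)
qed

lemma tp_carrier_tp_const: "c \<in> tate_alg v s \<Longrightarrow> tp_const c \<in> tp_carrier v s"
  by (rule tp_carrierI[of _ _ _ 0]) (auto simp: tp_const_def)

lemma tp_carrier_finsupp_coeffs: "P \<in> tp_carrier v s \<Longrightarrow> finsupp_coeffs (P n)"
  by (rule tate_alg_finsupp_coeffs) (rule tp_carrier_coeff)

lemma tp_tau_carrier_tp_zero [simp]: "tp_zero \<in> tp_tau_carrier v s"
  by (intro tp_tau_carrierI tp_carrierI[of _ _ _ 0]) simp_all

lemma tp_tau_carrier_tp_add: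
  "P \<in> tp_tau_carrier v s \<Longrightarrow> Q \<in> tp_tau_carrier v s \<Longrightarrow> tp_add P Q \<in> tp_tau_carrier v s"
  by (intro tp_tau_carrierI tp_carrier_tp_add) (auto simp: tp_tau_carrier_def tp_add_def tzero_def)

lemma tp_tau_carrier_tp_sub:
  "P \<in> tp_tau_carrier v s \<Longrightarrow> Q \<in> tp_tau_carrier v s \<Longrightarrow> tp_sub P Q \<in> tp_tau_carrier v s"
  by (intro tp_tau_carrierI tp_carrier_tp_sub) (auto simp: tp_tau_carrier_def tp_sub_def tzero_def)

lemma tp_tau_carrier_tp_mul_left:
  "P \<in> tp_tau_carrier v s \<Longrightarrow> Q \<in> tp_carrier v s \<Longrightarrow> tp_mul q P Q \<in> tp_tau_carrier v s"
  by (intro tp_tau_carrierI tp_carrier_tp_mul) (auto simp: tp_tau_carrier_def tp_mul_0)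

lemma tp_tau_carrier_tp_mul_right:
  "P \<in> tp_carrier v s \<Longrightarrow> Q \<in> tp_tau_carrier v s \<Longrightarrow> tp_mul q P Q \<in> tp_tau_carrier v s"
  by (intro tp_tau_carrierI tp_carrier_tp_mul) (auto simp: tp_tau_carrier_def tp_mul_0)

end

section \<open>The coefficient rings \<open>\<bbbF>\<^sub>q[t]\<close> and \<open>A[t]\<close>\<close>

definition tate_monom :: "(nat \<Rightarrow> nat) \<Rightarrow> 'c::field \<Rightarrow> 'c tate" where
  "tate_monom \<alpha> x = (\<lambda>\<beta>. if \<beta> = \<alpha> then x else 0)"

context frobenius_absval
begin

lemma FqThetaI: "(\<And>i. coeff P i \<in> Fq q) \<Longrightarrow> poly P \<theta> \<in> FqTheta q \<theta>"
  unfolding FqTheta_def by blast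

lemma FqTheta_0 [simp]: "(0::'c) \<in> FqTheta q \<theta>"
  using FqThetaI[of 0 \<theta>] by (simp add: Fq_def)

lemma FqTheta_theta: "(\<theta>::'c) \<in> FqTheta q \<theta>"
  using FqThetaI[of "[:0, 1:]" \<theta>] by (simp add: Fq_def coeff_pCons split: nat.splits)

lemma A_tI:
  "(\<And>\<alpha>. \<alpha> \<notin> mindex s \<Longrightarrow> a \<alpha> = 0) \<Longrightarrow> finite {\<alpha>. a \<alpha> \<noteq> 0} \<Longrightarrow> (\<And>\<alpha>. a \<alpha> \<in> FqTheta q \<theta>)
    \<Longrightarrow> a \<in> A_t s q \<theta>"
  by (simp add: A_t_def)

lemma tconst_A_t: "(x::'c) \<in> FqTheta q \<theta> \<Longrightarrow> tconst x \<in> A_t s q \<theta>"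
  by (rule A_tI) (auto simp: tconst_def mindex_def intro: finite_subset[of _ "{\<lambda>_. 0}"])

lemma tate_monom_A_t: "\<alpha> \<in> mindex s \<Longrightarrow> (x::'c) \<in> FqTheta q \<theta> \<Longrightarrow> tate_monom \<alpha> x \<in> A_t s q \<theta>"
  by (rule A_tI) (auto simp: tate_monom_def intro: finite_subset[of _ "{\<alpha>}"])

lemma tate_monom_Fq_t: "\<alpha> \<in> mindex s \<Longrightarrow> (x::'c) \<in> Fq q \<Longrightarrow> tate_monom \<alpha> x \<in> Fq_t s q"
  by (auto simp: Fq_t_def tate_monom_def Fq_def intro: finite_subset[of _ "{\<alpha>}"])

lemma Fq_t_ttau: "c \<in> Fq_t s q \<Longrightarrow> ttau q c = c"
  by (rule ext) (simp add: Fq_t_def ttau_def Fq_def)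

lemma Fq_t_funpow_ttau: "c \<in> Fq_t s q \<Longrightarrow> (ttau q ^^ k) c = c"
  by (induction k) (simp_all add: Fq_t_ttau)

lemma A_t_support_induct:
  assumes a: "a \<in> A_t s q (\<theta>::'c)"
    and monom: "\<And>\<alpha> x. \<alpha> \<in> mindex s \<Longrightarrow> x \<in> FqTheta q \<theta> \<Longrightarrow> P (tate_monom \<alpha> x)"
    and add: "\<And>a b. a \<in> A_t s q \<theta> \<Longrightarrow> b \<in> A_t s q \<theta> \<Longrightarrow> P a \<Longrightarrow> P b \<Longrightarrow> P (tadd a b)"
  shows "P a"
proof -
  have "finite S \<Longrightarrow> \<forall>a\<in>A_t s q \<theta>. {\<alpha>. a \<alpha> \<noteq> 0} \<subseteq> S \<longrightarrow> P a" for S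
  proof (induction S rule: finite_induct)
    case empty
    have "P (tate_monom (\<lambda>_. 0) 0)"
      by (rule monom) (simp_all add: mindex_def)
    moreover have "a = tate_monom (\<lambda>_. 0) 0" if "{\<alpha>. a \<alpha> \<noteq> 0} \<subseteq> {}" for a :: "'c tate"
      using that by (auto simp: tate_monom_def)
    ultimately show ?case by auto
  next
    case (insert \<alpha> S)
    show ?case
    proof (intro ballI impI)
      fix a assume a: "a \<in> A_t s q \<theta>" and supp: "{\<alpha>. a \<alpha> \<noteq> 0} \<subseteq> insert \<alpha> S"
      define a' where "a' = (\<lambda>\<beta>. if \<beta> = \<alpha> then 0 else a \<beta>)"
      have a': "a' \<in> A_t s q \<theta>"
        using a by (intro A_tI) (auto simp: a'_def A_t_def intro: finite_subset[of _ "{\<beta>. a \<beta> \<noteq> 0}"])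
      moreover have "{\<beta>. a' \<beta> \<noteq> 0} \<subseteq> S"
        using supp by (auto simp: a'_def)
      ultimately have "P a'" using insert.IH by blast
      show "P a"
      proof (cases "a \<alpha> = 0")
        case True
        then have "a = a'" by (auto simp: a'_def)
        with \<open>P a'\<close> show ?thesis by simp
      next
        case False
        with a have \<alpha>: "\<alpha> \<in> mindex s" "a \<alpha> \<in> FqTheta q \<theta>" by (auto simp: A_t_def)
        have "a = tadd a' (tate_monom \<alpha> (a \<alpha>))"
          by (auto simp: a'_def tate_monom_def tadd_def)
        with add[OF a' tate_monom_A_t[OF \<alpha>] \<open>P a'\<close> monom[OF \<alpha>]] show ?thesis
          by simp
      qed
    qed
  qed
  with a show ?thesis by (auto simp: A_t_def)
qed

lemma Fq_add: "(x::'c) \<in> Fq q \<Longrightarrow> y \<in> Fq q \<Longrightarrow> x + y \<in> Fq q"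
  by (simp add: Fq_def power_q_add)

lemma Fq_mult: "x \<in> Fq q \<Longrightarrow> y \<in> Fq q \<Longrightarrow> (x * y :: 'c) \<in> Fq q"
  by (simp add: Fq_def power_mult_distrib)

lemma Fq_sum: "(\<And>i. i \<in> I \<Longrightarrow> f i \<in> Fq q) \<Longrightarrow> (\<Sum>i\<in>I. f i :: 'c) \<in> Fq q"
  by (induction I rule: infinite_finite_induct) (simp_all add: Fq_def power_q_add)

lemma FqTheta_Fq: "(x::'c) \<in> Fq q \<Longrightarrow> x \<in> FqTheta q \<theta>"
  using FqThetaI[of "[:x:]" \<theta>] by (simp add: coeff_pCons Fq_def split: nat.splits)

lemma FqTheta_add:
  assumes "(x::'c) \<in> FqTheta q \<theta>" "y \<in> FqTheta q \<theta>"
  shows "x + y \<in> FqTheta q \<theta>"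
proof -
  obtain P Q where "\<And>i. coeff P i \<in> Fq q" "\<And>i. coeff Q i \<in> Fq q" "x = poly P \<theta>" "y = poly Q \<theta>"
    using assms unfolding FqTheta_def by blast
  then show ?thesis using FqThetaI[of "P + Q" \<theta>] by (simp add: Fq_add)
qed

lemma FqTheta_mult:
  assumes "(x::'c) \<in> FqTheta q \<theta>" "y \<in> FqTheta q \<theta>"
  shows "x * y \<in> FqTheta q \<theta>"
proof -
  obtain P Q where "\<And>i. coeff P i \<in> Fq q" "\<And>i. coeff Q i \<in> Fq q" "x = poly P \<theta>" "y = poly Q \<theta>"
    using assms unfolding FqTheta_def by blast
  then show ?thesis using FqThetaI[of "P * Q" \<theta>] by (simp add: coeff_mult Fq_sum Fq_mult)
qed

lemma FqTheta_sum: "(\<And>i. i \<in> I \<Longrightarrow> f i \<in> FqTheta q \<theta>) \<Longrightarrow> (\<Sum>i\<in>I. f i :: 'c) \<in> FqTheta q \<theta>"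
  by (induction I rule: infinite_finite_induct) (simp_all add: FqTheta_add)

lemma A_t_subset_tate_alg: "A_t s q (\<theta>::'c) \<subseteq> tate_alg v s"
proof
  fix a assume a: "a \<in> A_t s q \<theta>"
  show "a \<in> tate_alg v s"
  proof (rule tate_algI)
    show "a \<alpha> = 0" if "\<alpha> \<notin> mindex s" for \<alpha>
      using a that by (simp add: A_t_def)
    show "finite {\<alpha>. e \<le> v (a \<alpha>)}" if "0 < e" for e
      by (rule finite_subset[of _ "{\<alpha>. a \<alpha> \<noteq> 0}"]) (use a that in \<open>auto simp: A_t_def\<close>)
  qed
qed

lemma Fq_t_subset_A_t: "Fq_t s q \<subseteq> A_t s q (\<theta>::'c)"
  by (auto simp: Fq_t_def A_t_def FqTheta_Fq)

lemma tone_Fq_t: "(tone::'c tate) \<in> Fq_t s q"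
  by (auto simp: Fq_t_def tone_def tconst_def Fq_def mindex_def intro: finite_subset[of _ "{\<lambda>_. 0}"])

lemma A_t_tadd: "a \<in> A_t s q (\<theta>::'c) \<Longrightarrow> b \<in> A_t s q \<theta> \<Longrightarrow> tadd a b \<in> A_t s q \<theta>"
  by (rule A_tI)
    (auto simp: A_t_def tadd_def FqTheta_add intro: finite_subset[of _ "{\<alpha>. a \<alpha> \<noteq> 0} \<union> {\<alpha>. b \<alpha> \<noteq> 0}"])

lemma A_t_tmul:
  assumes a: "a \<in> A_t s q (\<theta>::'c)" and b: "b \<in> A_t s q \<theta>"
  shows "tmul a b \<in> A_t s q \<theta>"
proof (rule A_tI)
  have "tmul a b \<in> tate_alg v s"
    using a b A_t_subset_tate_alg by (blast intro: tate_alg_tmul)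
  then show "tmul a b \<alpha> = 0" if "\<alpha> \<notin> mindex s" for \<alpha>
    using that by (rule tate_alg_outside)
  have "{\<alpha>. tmul a b \<alpha> \<noteq> 0}
      \<subseteq> {\<alpha>. \<exists>\<beta>\<in>below \<alpha>. \<beta> \<in> {\<alpha>. a \<alpha> \<noteq> 0} \<and> (\<lambda>i. \<alpha> i - \<beta> i) \<in> {\<alpha>. b \<alpha> \<noteq> 0}}"
  proof
    fix \<alpha> assume "\<alpha> \<in> {\<alpha>. tmul a b \<alpha> \<noteq> 0}"
    then obtain \<beta> where "\<beta> \<in> below \<alpha>" "a \<beta> * b (\<lambda>i. \<alpha> i - \<beta> i) \<noteq> 0"
      unfolding tmul_below mem_Collect_eq by (rule sum.not_neutral_contains_not_neutral)
    then show "\<alpha> \<in> {\<alpha>. \<exists>\<beta>\<in>below \<alpha>. \<beta> \<in> {\<alpha>. a \<alpha> \<noteq> 0} \<and> (\<lambda>i. \<alpha> i - \<beta> i) \<in> {\<alpha>. b \<alpha> \<noteq> 0}}"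
      by auto
  qed
  moreover have "finite {\<alpha>. a \<alpha> \<noteq> 0}" "finite {\<alpha>. b \<alpha> \<noteq> 0}"
    using a b by (simp_all add: A_t_def)
  ultimately show "finite {\<alpha>. tmul a b \<alpha> \<noteq> 0}"
    using finite_below_split finite_subset by blast
  show "tmul a b \<alpha> \<in> FqTheta q \<theta>" for \<alpha>
    unfolding tmul_below using a b by (intro FqTheta_sum FqTheta_mult) (auto simp: A_t_def)
qed

lemma A_t_induct [consumes 1, case_names Fq_t add theta]:
  assumes a: "a \<in> A_t s q (\<theta>::'c)"
    and Fq_t: "\<And>c. c \<in> Fq_t s q \<Longrightarrow> P c"
    and add: "\<And>a b. a \<in> A_t s q \<theta> \<Longrightarrow> b \<in> A_t s q \<theta> \<Longrightarrow> P a \<Longrightarrow> P b \<Longrightarrow> P (tadd a b)"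
    and theta: "\<And>a. a \<in> A_t s q \<theta> \<Longrightarrow> P a \<Longrightarrow> P (tmul (tconst \<theta>) a)"
  shows "P a"
proof (rule A_t_support_induct[OF a])
  fix \<alpha> and x :: 'c
  assume \<alpha>: "\<alpha> \<in> mindex s" and "x \<in> FqTheta q \<theta>"
  then obtain p where "\<And>i. coeff p i \<in> Fq q" "x = poly p \<theta>"
    unfolding FqTheta_def by blast
  then show "P (tate_monom \<alpha> x)"
  proof (induction p arbitrary: x)
    case 0
    have "tate_monom \<alpha> (0::'c) \<in> Fq_t s q"
      using \<alpha> by (intro tate_monom_Fq_t) (simp_all add: Fq_def)
    with 0 show ?case by (simp add: Fq_t)
  next
    case (pCons c p)
    have c: "c \<in> Fq q" and p: "\<And>i. coeff p i \<in> Fq q"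
      using pCons.prems(1)[of 0] pCons.prems(1)[of "Suc i" for i] by simp_all
    have p_A_t: "tate_monom \<alpha> (poly p \<theta>) \<in> A_t s q \<theta>"
      using \<alpha> p by (intro tate_monom_A_t FqThetaI)
    have "tate_monom \<alpha> x = tadd (tate_monom \<alpha> c) (tmul (tconst \<theta>) (tate_monom \<alpha> (poly p \<theta>)))"
      using pCons.prems(2) fin_supp_mindex[OF \<alpha>]
      by (auto simp: tadd_def tmul_tconst_left finsupp_coeffs_def tate_monom_def)
    moreover have "P (tmul (tconst \<theta>) (tate_monom \<alpha> (poly p \<theta>)))"
      using p by (intro theta p_A_t pCons.IH) simp_all
    ultimately show ?case
      using add[OF tate_monom_A_t[OF \<alpha> FqTheta_Fq[OF c]] A_t_tmul[OF tconst_A_t[OF FqTheta_theta] p_A_t]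
          Fq_t[OF tate_monom_Fq_t[OF \<alpha> c]]]
      by simp
  qed
qed (fact add)

end

section \<open>Biderivations of a Drinfeld module\<close>

locale drinfeld = frobenius_absval v q for v :: "'c::field \<Rightarrow> real" and q +
  fixes s :: nat and \<theta> :: 'c and \<phi> :: "'c tate \<Rightarrow> 'c tpoly" and r :: nat
  assumes drinfeld_module: "drinfeld_module v s q \<theta> \<phi> r"
begin

abbreviation phi_theta :: "'c tpoly" where
  "phi_theta \<equiv> \<phi> (tconst \<theta>)"

lemma phi_tp_carrier: "a \<in> A_t s q \<theta> \<Longrightarrow> \<phi> a \<in> tp_carrier v s"
  using drinfeld_module by (simp add: drinfeld_module_def)

lemma phi_tadd: "a \<in> A_t s q \<theta> \<Longrightarrow> b \<in> A_t s q \<theta> \<Longrightarrow> \<phi> (tadd a b) = tp_add (\<phi> a) (\<phi> b)"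
  using drinfeld_module by (simp add: drinfeld_module_def)

lemma phi_tmul: "a \<in> A_t s q \<theta> \<Longrightarrow> b \<in> A_t s q \<theta> \<Longrightarrow> \<phi> (tmul a b) = tp_mul q (\<phi> a) (\<phi> b)"
  using drinfeld_module by (simp add: drinfeld_module_def)

lemma phi_Fq_t: "c \<in> Fq_t s q \<Longrightarrow> \<phi> c = tp_const c"
  using drinfeld_module by (simp add: drinfeld_module_def)

lemma one_le_r: "1 \<le> r"
  using drinfeld_module by (simp add: drinfeld_module_def)

lemma phi_theta_0: "phi_theta 0 = tconst \<theta>"
  using drinfeld_module by (simp add: drinfeld_module_def)

lemma phi_theta_above_rank: "r < n \<Longrightarrow> phi_theta n = tzero"
  using drinfeld_module by (simp add: drinfeld_module_def)

lemma tconst_theta_A_t: "tconst \<theta> \<in> A_t s q \<theta>"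
  by (intro tconst_A_t FqTheta_theta)

lemma tone_A_t: "tone \<in> A_t s q \<theta>"
  using tone_Fq_t Fq_t_subset_A_t by blast

lemma phi_coeff_0: "a \<in> A_t s q \<theta> \<Longrightarrow> \<phi> a 0 = a"
proof (induction rule: A_t_induct)
  case (Fq_t c)
  then show ?case by (simp add: phi_Fq_t tp_const_def)
next
  case (add a b)
  then show ?case by (simp add: phi_tadd) (simp add: tp_add_def tadd_def)
next
  case (theta a)
  then show ?case by (simp add: phi_tmul tconst_theta_A_t tp_mul_0 phi_theta_0)
qed

lemma DerI:
  assumes "\<And>a. a \<notin> A_t s q \<theta> \<Longrightarrow> \<eta> a = tp_zero"
    and "\<And>a. a \<in> A_t s q \<theta> \<Longrightarrow> \<eta> a \<in> tp_tau_carrier v s"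
    and "\<And>a b. a \<in> A_t s q \<theta> \<Longrightarrow> b \<in> A_t s q \<theta> \<Longrightarrow> \<eta> (tadd a b) = tp_add (\<eta> a) (\<eta> b)"
    and "\<And>c a. c \<in> Fq_t s q \<Longrightarrow> a \<in> A_t s q \<theta> \<Longrightarrow> \<eta> (tmul c a) = tp_mul q (tp_const c) (\<eta> a)"
    and "\<And>a b. a \<in> A_t s q \<theta> \<Longrightarrow> b \<in> A_t s q \<theta> \<Longrightarrow>
           \<eta> (tmul a b) = tp_add (tp_mul q (tp_const a) (\<eta> b)) (tp_mul q (\<eta> a) (\<phi> b))"
  shows "\<eta> \<in> Der v s q \<theta> \<phi>"
  using assms by (simp add: Der_def)

lemma
  assumes "\<eta> \<in> Der v s q \<theta> \<phi>"
  shows Der_outside: "a \<notin> A_t s q \<theta> \<Longrightarrow> \<eta> a = tp_zero"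
    and Der_tp_tau_carrier: "a \<in> A_t s q \<theta> \<Longrightarrow> \<eta> a \<in> tp_tau_carrier v s"
    and Der_tadd: "a \<in> A_t s q \<theta> \<Longrightarrow> b \<in> A_t s q \<theta> \<Longrightarrow> \<eta> (tadd a b) = tp_add (\<eta> a) (\<eta> b)"
    and Der_Fq_t_linear:
      "c \<in> Fq_t s q \<Longrightarrow> a \<in> A_t s q \<theta> \<Longrightarrow> \<eta> (tmul c a) = tp_mul q (tp_const c) (\<eta> a)"
    and Der_tmul: "a \<in> A_t s q \<theta> \<Longrightarrow> b \<in> A_t s q \<theta> \<Longrightarrow>
           \<eta> (tmul a b) = tp_add (tp_mul q (tp_const a) (\<eta> b)) (tp_mul q (\<eta> a) (\<phi> b))"
  using assms by (simp_all add: Der_def)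

lemma Der_zero: "(\<lambda>_. tp_zero) \<in> Der v s q \<theta> \<phi>"
  by (rule DerI) simp_all

lemma Der_add:
  assumes "\<eta> \<in> Der v s q \<theta> \<phi>" "\<zeta> \<in> Der v s q \<theta> \<phi>"
  shows "(\<lambda>a. tp_add (\<eta> a) (\<zeta> a)) \<in> Der v s q \<theta> \<phi>"
proof (rule DerI)
  fix a b c
  show "a \<notin> A_t s q \<theta> \<Longrightarrow> tp_add (\<eta> a) (\<zeta> a) = tp_zero"
    using assms by (simp add: Der_outside tp_add_def tp_zero_def tzero_def)
  show "a \<in> A_t s q \<theta> \<Longrightarrow> tp_add (\<eta> a) (\<zeta> a) \<in> tp_tau_carrier v s"
    using assms by (simp add: Der_tp_tau_carrier tp_tau_carrier_tp_add)
  show "a \<in> A_t s q \<theta> \<Longrightarrow> b \<in> A_t s q \<theta> \<Longrightarrow>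
      tp_add (\<eta> (tadd a b)) (\<zeta> (tadd a b)) = tp_add (tp_add (\<eta> a) (\<zeta> a)) (tp_add (\<eta> b) (\<zeta> b))"
    using assms by (simp add: Der_tadd tp_add_def algebra_simps)
  show "c \<in> Fq_t s q \<Longrightarrow> a \<in> A_t s q \<theta> \<Longrightarrow>
      tp_add (\<eta> (tmul c a)) (\<zeta> (tmul c a)) = tp_mul q (tp_const c) (tp_add (\<eta> a) (\<zeta> a))"
    using assms by (simp add: Der_Fq_t_linear tp_mul_add_right)
  show "a \<in> A_t s q \<theta> \<Longrightarrow> b \<in> A_t s q \<theta> \<Longrightarrow>
      tp_add (\<eta> (tmul a b)) (\<zeta> (tmul a b))
      = tp_add (tp_mul q (tp_const a) (tp_add (\<eta> b) (\<zeta> b))) (tp_mul q (tp_add (\<eta> a) (\<zeta> a)) (\<phi> b))"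
    using assms by (simp add: Der_tmul tp_mul_add_right tp_mul_add_left) (simp add: tp_add_def algebra_simps)
qed

lemma Der_bd_sub:
  assumes "\<eta> \<in> Der v s q \<theta> \<phi>" "\<zeta> \<in> Der v s q \<theta> \<phi>"
  shows "bd_sub \<eta> \<zeta> \<in> Der v s q \<theta> \<phi>"
proof (rule DerI)
  fix a b c
  show "a \<notin> A_t s q \<theta> \<Longrightarrow> bd_sub \<eta> \<zeta> a = tp_zero"
    using assms by (simp add: Der_outside bd_sub_def tp_sub_def tp_zero_def tzero_def)
  show "a \<in> A_t s q \<theta> \<Longrightarrow> bd_sub \<eta> \<zeta> a \<in> tp_tau_carrier v s"
    using assms by (simp add: Der_tp_tau_carrier bd_sub_def tp_tau_carrier_tp_sub)
  show "a \<in> A_t s q \<theta> \<Longrightarrow> b \<in> A_t s q \<theta> \<Longrightarrow>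
      bd_sub \<eta> \<zeta> (tadd a b) = tp_add (bd_sub \<eta> \<zeta> a) (bd_sub \<eta> \<zeta> b)"
    using assms by (simp add: Der_tadd bd_sub_def tp_sub_def tp_add_def algebra_simps)
  show "c \<in> Fq_t s q \<Longrightarrow> a \<in> A_t s q \<theta> \<Longrightarrow>
      bd_sub \<eta> \<zeta> (tmul c a) = tp_mul q (tp_const c) (bd_sub \<eta> \<zeta> a)"
    using assms by (simp add: Der_Fq_t_linear bd_sub_def tp_mul_sub_right)
  show "a \<in> A_t s q \<theta> \<Longrightarrow> b \<in> A_t s q \<theta> \<Longrightarrow>
      bd_sub \<eta> \<zeta> (tmul a b)
      = tp_add (tp_mul q (tp_const a) (bd_sub \<eta> \<zeta> b)) (tp_mul q (bd_sub \<eta> \<zeta> a) (\<phi> b))"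
    using assms by (simp add: Der_tmul bd_sub_def tp_mul_sub_right tp_mul_sub_left)
      (simp add: tp_sub_def tp_add_def algebra_simps)
qed

lemma tp_const_left_commute:
  "tp_mul q (tp_const a) (tp_mul q (tp_const b) X) = tp_mul q (tp_const b) (tp_mul q (tp_const a) (X::'c tpoly))"
  by (simp add: tp_mul_assoc[symmetric] tp_const_tmul[symmetric] tmul_commute)

lemma Der_scale:
  assumes "\<eta> \<in> Der v s q \<theta> \<phi>" "f \<in> tate_alg v s"
  shows "(\<lambda>a. tp_mul q (tp_const f) (\<eta> a)) \<in> Der v s q \<theta> \<phi>"
proof (rule DerI)
  fix a b c
  show "a \<notin> A_t s q \<theta> \<Longrightarrow> tp_mul q (tp_const f) (\<eta> a) = tp_zero"
    using Der_outside[OF assms(1)] by simp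
  show "a \<in> A_t s q \<theta> \<Longrightarrow> tp_mul q (tp_const f) (\<eta> a) \<in> tp_tau_carrier v s"
    using assms by (simp add: Der_tp_tau_carrier tp_tau_carrier_tp_mul_right tp_carrier_tp_const)
  show "a \<in> A_t s q \<theta> \<Longrightarrow> b \<in> A_t s q \<theta> \<Longrightarrow> tp_mul q (tp_const f) (\<eta> (tadd a b))
      = tp_add (tp_mul q (tp_const f) (\<eta> a)) (tp_mul q (tp_const f) (\<eta> b))"
    using assms by (simp add: Der_tadd tp_mul_add_right)
  show "c \<in> Fq_t s q \<Longrightarrow> a \<in> A_t s q \<theta> \<Longrightarrow>
      tp_mul q (tp_const f) (\<eta> (tmul c a)) = tp_mul q (tp_const c) (tp_mul q (tp_const f) (\<eta> a))"
    using assms by (simp add: Der_Fq_t_linear tp_const_left_commute)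
  show "a \<in> A_t s q \<theta> \<Longrightarrow> b \<in> A_t s q \<theta> \<Longrightarrow> tp_mul q (tp_const f) (\<eta> (tmul a b))
      = tp_add (tp_mul q (tp_const a) (tp_mul q (tp_const f) (\<eta> b))) (tp_mul q (tp_mul q (tp_const f) (\<eta> a)) (\<phi> b))"
    using assms by (simp add: Der_tmul tp_mul_add_right tp_mul_assoc tp_const_left_commute)
qed

lemma Der_bd_lincomb:
  "(\<And>i. i < k \<Longrightarrow> \<delta> i \<in> Der v s q \<theta> \<phi>) \<Longrightarrow> (\<And>i. i < k \<Longrightarrow> c i \<in> tate_alg v s)
    \<Longrightarrow> bd_lincomb q c \<delta> k \<in> Der v s q \<theta> \<phi>"
proof (induction k)
  case 0
  then show ?case using Der_zero by (simp add: bd_lincomb_def tp_zero_def tzero_def)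
next
  case (Suc k)
  have "bd_lincomb q c \<delta> (Suc k) = (\<lambda>a. tp_add (bd_lincomb q c \<delta> k a) (tp_mul q (tp_const (c k)) (\<delta> k a)))"
    by (simp add: bd_lincomb_def tp_add_def)
  with Suc show ?case
    by (simp add: Der_add Der_scale)
qed

definition inner_bider :: "'c tpoly \<Rightarrow> 'c tate \<Rightarrow> 'c tpoly" where
  "inner_bider m = (\<lambda>a. if a \<in> A_t s q \<theta> then tp_sub (tp_mul q m (\<phi> a)) (tp_mul q (tp_const a) m)
                       else tp_zero)"

lemma Der_si_iff: "\<eta> \<in> Der_si v s q \<theta> \<phi> \<longleftrightarrow> (\<exists>m\<in>tp_tau_carrier v s. \<eta> = inner_bider m)"
  by (simp add: Der_si_def inner_bider_def fun_eq_iff split del: if_split)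

lemma tp_mul_Fq_t_commute: "c \<in> Fq_t s q \<Longrightarrow> tp_mul q (X::'c tpoly) (tp_const c) = tp_mul q (tp_const c) X"
  by (rule ext) (simp add: tp_mul_const_right tp_mul_const_left Fq_t_funpow_ttau tmul_commute)

lemma Der_inner_bider:
  assumes m: "m \<in> tp_tau_carrier v s"
  shows "inner_bider m \<in> Der v s q \<theta> \<phi>"
proof (rule DerI)
  fix a b c
  assume "a \<in> A_t s q \<theta>"
  show "inner_bider m a \<in> tp_tau_carrier v s"
    using \<open>a \<in> A_t s q \<theta>\<close> m A_t_subset_tate_alg
    by (auto simp: inner_bider_def intro!: tp_tau_carrier_tp_sub
        tp_tau_carrier_tp_mul_left[OF m phi_tp_carrier] tp_tau_carrier_tp_mul_right[OF _ m] tp_carrier_tp_const)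
  show "b \<in> A_t s q \<theta> \<Longrightarrow> inner_bider m (tadd a b) = tp_add (inner_bider m a) (inner_bider m b)"
    using \<open>a \<in> A_t s q \<theta>\<close> A_t_tadd
    by (simp add: inner_bider_def phi_tadd tp_const_tadd tp_mul_add_right tp_mul_add_left)
      (simp add: tp_add_def tp_sub_def algebra_simps)
  show "inner_bider m (tmul c a) = tp_mul q (tp_const c) (inner_bider m a)" if c: "c \<in> Fq_t s q"
  proof -
    have "c \<in> A_t s q \<theta>" using c Fq_t_subset_A_t by blast
    moreover have "tp_mul q m (tp_mul q (tp_const c) (\<phi> a)) = tp_mul q (tp_const c) (tp_mul q m (\<phi> a))"
      by (simp add: tp_mul_assoc[symmetric] tp_mul_Fq_t_commute[OF c])
    ultimately show ?thesis
      using \<open>a \<in> A_t s q \<theta>\<close> A_t_tmul[where a = c and b = a]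
      by (simp add: inner_bider_def phi_tmul phi_Fq_t[OF c] tp_const_tmul tp_mul_assoc tp_mul_sub_right)
  qed
  show "b \<in> A_t s q \<theta> \<Longrightarrow> inner_bider m (tmul a b)
      = tp_add (tp_mul q (tp_const a) (inner_bider m b)) (tp_mul q (inner_bider m a) (\<phi> b))"
    using \<open>a \<in> A_t s q \<theta>\<close> A_t_tmul
    by (simp add: inner_bider_def phi_tmul tp_const_tmul tp_mul_sub_right tp_mul_sub_left tp_mul_assoc)
      (simp add: tp_add_def tp_sub_def)
qed (simp add: inner_bider_def)

lemma delta0_Der: "delta0 s q \<theta> \<phi> \<in> Der v s q \<theta> \<phi>"
proof (rule DerI)
  fix a b c
  assume "a \<in> A_t s q \<theta>"
  then have "tp_sub (\<phi> a) (tp_const a) \<in> tp_carrier v s"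
    using A_t_subset_tate_alg by (blast intro: tp_carrier_tp_sub phi_tp_carrier tp_carrier_tp_const)
  moreover have "tp_sub (\<phi> a) (tp_const a) 0 = tzero"
    using phi_coeff_0[OF \<open>a \<in> A_t s q \<theta>\<close>] by (simp add: tp_sub_def tp_const_def tzero_def)
  ultimately show "delta0 s q \<theta> \<phi> a \<in> tp_tau_carrier v s"
    using \<open>a \<in> A_t s q \<theta>\<close> by (simp add: delta0_def tp_tau_carrierI)
  show "b \<in> A_t s q \<theta> \<Longrightarrow> delta0 s q \<theta> \<phi> (tadd a b) = tp_add (delta0 s q \<theta> \<phi> a) (delta0 s q \<theta> \<phi> b)"
    using \<open>a \<in> A_t s q \<theta>\<close> A_t_tadd
    by (simp add: delta0_def phi_tadd tp_const_tadd) (simp add: tp_add_def tp_sub_def algebra_simps)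
  show "delta0 s q \<theta> \<phi> (tmul c a) = tp_mul q (tp_const c) (delta0 s q \<theta> \<phi> a)" if c: "c \<in> Fq_t s q"
  proof -
    have "c \<in> A_t s q \<theta>" using c Fq_t_subset_A_t by blast
    then show ?thesis
      using \<open>a \<in> A_t s q \<theta>\<close> A_t_tmul[where a = c and b = a]
      by (simp add: delta0_def phi_tmul phi_Fq_t[OF c] tp_const_tmul tp_mul_sub_right)
  qed
  show "b \<in> A_t s q \<theta> \<Longrightarrow> delta0 s q \<theta> \<phi> (tmul a b)
      = tp_add (tp_mul q (tp_const a) (delta0 s q \<theta> \<phi> b)) (tp_mul q (delta0 s q \<theta> \<phi> a) (\<phi> b))"
    using \<open>a \<in> A_t s q \<theta>\<close> A_t_tmul
    by (simp add: delta0_def phi_tmul tp_const_tmul tp_mul_sub_right tp_mul_sub_left)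
      (simp add: tp_add_def tp_sub_def)
qed (simp add: delta0_def)

lemma Der_tone:
  assumes "\<eta> \<in> Der v s q \<theta> \<phi>"
  shows "\<eta> tone = tp_zero"
proof -
  have coeffs: "finsupp_coeffs (\<eta> tone n)" for n
    using Der_tp_tau_carrier[OF assms tone_A_t] by (blast dest: tp_tau_carrierD tp_carrier_finsupp_coeffs)
  have "\<eta> tone = \<eta> (tmul tone tone)"
    by (simp add: tmul_tone_left tate_alg_finsupp_coeffs)
  also have "\<dots> = tp_add (\<eta> tone) (\<eta> tone)"
    using Der_tmul[OF assms tone_A_t tone_A_t] coeffs
    by (simp add: phi_Fq_t[OF tone_Fq_t] tp_mul_tone_left tp_mul_tone_right)
  finally have "\<eta> tone n \<alpha> = \<eta> tone n \<alpha> + \<eta> tone n \<alpha>" for n \<alpha>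
    by (metis tp_add_def)
  then have "\<eta> tone n \<alpha> = 0" for n \<alpha>
    by (metis add_cancel_right_right)
  then show ?thesis
    by (simp add: fun_eq_iff)
qed

lemma Der_eq_zero_if_theta:
  assumes \<eta>: "\<eta> \<in> Der v s q \<theta> \<phi>" and "\<eta> (tconst \<theta>) = tp_zero"
  shows "\<eta> = (\<lambda>_. tp_zero)"
proof
  fix a
  show "\<eta> a = tp_zero"
  proof (cases "a \<in> A_t s q \<theta>")
    case True
    show ?thesis
    proof (rule A_t_induct[OF True])
      fix c :: "'c tate" assume c: "c \<in> Fq_t s q"
      then have "\<eta> c = \<eta> (tmul c tone)"
        using A_t_subset_tate_alg Fq_t_subset_A_t
        by (metis subsetD tmul_tone_right tate_alg_finsupp_coeffs)
      also have "\<dots> = tp_mul q (tp_const c) (\<eta> tone)"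
        using c tone_A_t by (rule Der_Fq_t_linear[OF \<eta>])
      finally show "\<eta> c = tp_zero" by (simp add: Der_tone[OF \<eta>])
    next
      fix a b :: "'c tate"
      assume "a \<in> A_t s q \<theta>" "b \<in> A_t s q \<theta>" "\<eta> a = tp_zero" "\<eta> b = tp_zero"
      then show "\<eta> (tadd a b) = tp_zero" by (simp add: Der_tadd[OF \<eta>])
    next
      fix a :: "'c tate" assume "a \<in> A_t s q \<theta>" "\<eta> a = tp_zero"
      then show "\<eta> (tmul (tconst \<theta>) a) = tp_zero"
        using assms(2) by (simp add: Der_tmul[OF \<eta> tconst_theta_A_t])
    qed
  qed (rule Der_outside[OF \<eta>])
qed

lemma Der_eq_if_theta:
  assumes "\<eta> \<in> Der v s q \<theta> \<phi>" "\<zeta> \<in> Der v s q \<theta> \<phi>" "\<eta> (tconst \<theta>) = \<zeta> (tconst \<theta>)"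
  shows "\<eta> = \<zeta>"
proof -
  have "bd_sub \<eta> \<zeta> (tconst \<theta>) = tp_zero"
    using assms(3) by (simp add: bd_sub_def tp_sub_def tp_zero_def tzero_def)
  then have "bd_sub \<eta> \<zeta> = (\<lambda>_. tp_zero)"
    using Der_eq_zero_if_theta Der_bd_sub[OF assms(1,2)] by blast
  then show ?thesis
    by (auto simp: fun_eq_iff bd_sub_def tp_sub_def)
qed

end

section \<open>Strictly inner biderivations at \<open>\<theta>\<close>\<close>

context drinfeld
begin

definition inner_theta :: "'c tpoly \<Rightarrow> 'c tpoly" where
  "inner_theta m = tp_sub (tp_mul q m phi_theta) (tp_mul q (tp_const (tconst \<theta>)) m)"

lemma inner_bider_theta: "inner_bider m (tconst \<theta>) = inner_theta m"
  by (simp add: inner_bider_def inner_theta_def tconst_theta_A_t)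

lemma inner_theta_tp_add: "inner_theta (tp_add m m') = tp_add (inner_theta m) (inner_theta m')"
  by (simp add: inner_theta_def tp_mul_add_left tp_mul_add_right)
    (simp add: tp_add_def tp_sub_def algebra_simps)

lemma inner_theta_tp_zero: "inner_theta tp_zero = tp_zero"
  by (simp add: inner_theta_def)

lemma tp_tau_carrier_inner_theta: "m \<in> tp_tau_carrier v s \<Longrightarrow> inner_theta m \<in> tp_tau_carrier v s"
  unfolding inner_theta_def
  by (intro tp_tau_carrier_tp_sub tp_tau_carrier_tp_mul_left tp_tau_carrier_tp_mul_right
      phi_tp_carrier tconst_theta_A_t tp_carrier_tp_const tate_alg_tconst)

lemma inner_theta_tp_monom:
  assumes "1 \<le> k" "r + k \<le> n"
  shows "inner_theta (tp_monom c k) n = tmul c ((ttau q ^^ k) (phi_theta (n - k)))"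
  using assms one_le_r
  by (simp add: inner_theta_def tp_sub_def tp_mul_tp_monom_left tp_mul_const_left) (simp add: tp_monom_def)

end

locale drinfeld_lead_unit = drinfeld v q s \<theta> \<phi> r
  for v :: "'c::field \<Rightarrow> real" and q s \<theta> \<phi> r +
  fixes g :: "'c tate"
  assumes g_tate_alg: "g \<in> tate_alg v s"
    and g_inverse: "tmul g (\<phi> (tconst \<theta>) r) = tone"
begin

lemma funpow_ttau_lead_unit: "tmul ((ttau q ^^ k) g) ((ttau q ^^ k) (phi_theta r)) = tone"
  by (simp add: funpow_ttau_tmul[symmetric] g_inverse)

text \<open>Division with remainder by \<open>m \<mapsto> m \<phi>\<^sub>\<theta> - \<theta> m\<close>: the leading coefficient
  \<open>b\<close> of \<open>B\<close> in degree \<open>r + k\<close> is removed by \<open>m = b g\<^sup>(\<^sup>k\<^sup>) \<tau>\<^sup>k\<close>, because \<open>g\<close> inverts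
  the leading coefficient of \<open>\<phi>\<^sub>\<theta>\<close>.\<close>
lemma inner_theta_reduce:
  assumes "B \<in> tp_tau_carrier v s" "tp_degree_le B (r + N)"
  shows "\<exists>m\<in>tp_tau_carrier v s. tp_degree_le (tp_sub B (inner_theta m)) r"
  using assms
proof (induction N arbitrary: B)
  case 0
  have "tp_sub B (inner_theta tp_zero) = B"
    by (simp add: inner_theta_tp_zero)
  with 0 show ?case
    by (metis add_0_right tp_tau_carrier_tp_zero)
next
  case (Suc N)
  define k where "k = Suc N"
  define m where "m = tp_monom (tmul (B (r + k)) ((ttau q ^^ k) g)) k"
  have B: "B \<in> tp_carrier v s" using Suc.prems(1) by (rule tp_tau_carrierD)
  have "tmul (B (r + k)) ((ttau q ^^ k) g) \<in> tate_alg v s"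
    using tp_carrier_coeff[OF B] g_tate_alg by (intro tate_alg_tmul tate_alg_funpow_ttau)
  then have m: "m \<in> tp_tau_carrier v s"
    by (intro tp_tau_carrierI tp_carrierI[of _ _ _ k]) (simp_all add: m_def tp_monom_def k_def)
  have "1 \<le> k" by (simp add: k_def)
  have "inner_theta m n = B n" if "r + N < n" for n
  proof (cases "n = r + k")
    case True
    with \<open>1 \<le> k\<close> show ?thesis
      by (simp add: m_def inner_theta_tp_monom tmul_assoc funpow_ttau_lead_unit tmul_tone_right
          tp_carrier_finsupp_coeffs[OF B])
  next
    case False
    with that have "r + k < n" by (simp add: k_def)
    with \<open>1 \<le> k\<close> Suc.prems(2) show ?thesis
      by (simp add: m_def inner_theta_tp_monom phi_theta_above_rank tp_degree_le_def k_def)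
  qed
  then have "tp_degree_le (tp_sub B (inner_theta m)) (r + N)"
    by (simp add: tp_degree_le_def tp_sub_def tzero_def)
  then obtain m' where m': "m' \<in> tp_tau_carrier v s"
    "tp_degree_le (tp_sub (tp_sub B (inner_theta m)) (inner_theta m')) r"
    using Suc.IH[OF tp_tau_carrier_tp_sub[OF Suc.prems(1) tp_tau_carrier_inner_theta[OF m]]] by blast
  moreover have "tp_sub (tp_sub B (inner_theta m)) (inner_theta m') = tp_sub B (inner_theta (tp_add m m'))"
    by (simp add: inner_theta_tp_add) (simp add: tp_sub_def tp_add_def algebra_simps)
  ultimately show ?case
    using tp_tau_carrier_tp_add[OF m] by auto
qed

lemma inner_theta_degree_le_rank_imp_zero:
  assumes m: "m \<in> tp_tau_carrier v s" and deg: "tp_degree_le (inner_theta m) r"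
  shows "m = tp_zero"
proof (rule ccontr)
  assume "m \<noteq> tp_zero"
  have fin: "finite {k. m k \<noteq> tzero}"
    using m by (simp add: tp_tau_carrier_def tp_carrier_def)
  define K where "K = Max {k. m k \<noteq> tzero}"
  have ne: "{k. m k \<noteq> tzero} \<noteq> {}"
    using \<open>m \<noteq> tp_zero\<close> by (auto simp: tp_zero_def)
  then have mK: "m K \<noteq> tzero"
    using Max_in[OF fin] by (simp add: K_def)
  have above: "m i = tzero" if "K < i" for i
    using Max_ge[OF fin, of i] that by (force simp: K_def)
  have "1 \<le> K"
    using mK tp_tau_carrierD(2)[OF m] by (cases K) auto
  then have "tp_mul q (tp_const (tconst \<theta>)) m (K + r) = tzero"
    using above one_le_r by (simp add: tp_mul_const_left)
  moreover have "inner_theta m (K + r) = tzero"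
    using deg \<open>1 \<le> K\<close> by (simp add: tp_degree_le_def)
  ultimately have "tmul (m K) ((ttau q ^^ K) (phi_theta r)) = tzero"
    using tp_mul_coeff_top[of K m r phi_theta] above phi_theta_above_rank
    by (simp add: inner_theta_def tp_sub_def fun_eq_iff)
  then have "tmul ((ttau q ^^ K) g) (tmul (m K) ((ttau q ^^ K) (phi_theta r))) = tzero"
    by simp
  then have "m K = tzero"
    using tp_carrier_finsupp_coeffs[OF tp_tau_carrierD(1)[OF m]]
    by (simp add: tmul_left_commute funpow_ttau_lead_unit tmul_tone_right)
  with mK show False by contradiction
qed

end

section \<open>The de Rham basis\<close>

locale drinfeld_de_Rham_basis = drinfeld_lead_unit v q s \<theta> \<phi> r g
  for v :: "'c::field \<Rightarrow> real" and q s \<theta> \<phi> r g +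
  fixes \<delta> :: "nat \<Rightarrow> 'c tate \<Rightarrow> 'c tpoly"
  assumes delta_0: "\<delta> 0 = delta0 s q \<theta> \<phi>"
    and delta_Der: "\<And>i. 1 \<le> i \<Longrightarrow> i < r \<Longrightarrow> \<delta> i \<in> Der v s q \<theta> \<phi>"
    and delta_theta: "\<And>i. 1 \<le> i \<Longrightarrow> i < r \<Longrightarrow> \<delta> i (tconst \<theta>) = tp_tau_pow i"
begin

lemma delta_in_Der: "i < r \<Longrightarrow> \<delta> i \<in> Der v s q \<theta> \<phi>"
  by (cases i) (simp_all add: delta_0 delta0_Der delta_Der)

lemma bd_lincomb_theta:
  assumes "\<And>i. i < r \<Longrightarrow> finsupp_coeffs (c i)"
  shows "bd_lincomb q c \<delta> r (tconst \<theta>) n \<alpha> =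
     (if n = 0 then 0 else tmul (c 0) (phi_theta n) \<alpha> + (if n < r then c n \<alpha> else 0))"
proof -
  have "bd_lincomb q c \<delta> r (tconst \<theta>) n \<alpha>
      = tmul (c 0) (\<delta> 0 (tconst \<theta>) n) \<alpha> + (\<Sum>i\<in>{1..<r}. tmul (c i) (tp_tau_pow i n) \<alpha>)"
    using one_le_r
    by (simp add: bd_lincomb_def tp_mul_const_left lessThan_atLeast0 sum.atLeast_Suc_lessThan delta_theta)
  also have "\<delta> 0 (tconst \<theta>) n = (if n = 0 then tzero else phi_theta n)"
    using tconst_theta_A_t phi_theta_0
    by (auto simp: delta_0 delta0_def tp_sub_def tp_const_def tzero_def)
  also have "(\<Sum>i\<in>{1..<r}. tmul (c i) (tp_tau_pow i n) \<alpha>) = (if n \<noteq> 0 \<and> n < r then c n \<alpha> else 0)"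
  proof (cases "n \<noteq> 0 \<and> n < r")
    case True
    then have "(\<Sum>i\<in>{1..<r}. tmul (c i) (tp_tau_pow i n) \<alpha>) = tmul (c n) tone \<alpha>"
      by (subst sum.remove[of _ n]) (auto simp: tp_tau_pow_def intro!: sum.neutral)
    with True assms show ?thesis by (simp add: tmul_tone_right)
  qed (auto simp: tp_tau_pow_def intro!: sum.neutral)
  finally show ?thesis by auto
qed

text \<open>Only \<open>\<delta>\<^sup>0\<close> contributes to the coefficient of \<open>\<tau>\<^sup>r\<close>, which fixes \<open>c\<^sub>0\<close>;
  the remaining coefficients then determine \<open>c\<^sub>1, \<dots>, c\<^sub>r\<^sub>-\<^sub>1\<close>.\<close>
lemma bd_lincomb_theta_onto:
  assumes B: "B \<in> tp_tau_carrier v s" "tp_degree_le B r"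
  obtains c where "\<And>i. c i \<in> tate_alg v s" "bd_lincomb q c \<delta> r (tconst \<theta>) = B"
proof
  have B_coeff: "B n \<in> tate_alg v s" for n
    using tp_tau_carrierD(1)[OF B(1)] by (rule tp_carrier_coeff)
  have phi_theta_coeff: "phi_theta n \<in> tate_alg v s" for n
    using phi_tp_carrier[OF tconst_theta_A_t] by (rule tp_carrier_coeff)
  define c0 where "c0 = tmul (B r) g"
  define c where "c = (\<lambda>i. if i = 0 then c0 else (\<lambda>\<alpha>. B i \<alpha> - tmul c0 (phi_theta i) \<alpha>))"
  show c: "c i \<in> tate_alg v s" for i
    using g_tate_alg B_coeff phi_theta_coeff
    by (auto simp: c_def c0_def intro!: tate_alg_diff tate_alg_tmul)
  have c0: "tmul c0 (phi_theta r) = B r"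
    using g_inverse by (simp add: c0_def tmul_assoc tmul_tone_right tate_alg_finsupp_coeffs[OF B_coeff])
  have lincomb: "bd_lincomb q c \<delta> r (tconst \<theta>) n \<alpha> =
      (if n = 0 then 0 else tmul (c 0) (phi_theta n) \<alpha> + (if n < r then c n \<alpha> else 0))" for n \<alpha>
    using c by (intro bd_lincomb_theta tate_alg_finsupp_coeffs)
  have "bd_lincomb q c \<delta> r (tconst \<theta>) n \<alpha> = B n \<alpha>" for n \<alpha>
  proof -
    consider "n = 0" | "0 < n" "n < r" | "n = r" | "r < n" by linarith
    then show ?thesis
    proof cases
      case 1
      then show ?thesis using lincomb tp_tau_carrierD(2)[OF B(1)] by simp
    next
      case 2
      then show ?thesis using lincomb by (simp add: c_def)
    next
      case 3
      then show ?thesis using lincomb c0 one_le_r by (simp add: c_def)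
    next
      case 4
      then show ?thesis
        using lincomb B(2) phi_theta_above_rank[of n] by (simp add: tp_degree_le_def)
    qed
  qed
  then show "bd_lincomb q c \<delta> r (tconst \<theta>) = B"
    by (simp add: fun_eq_iff)
qed

lemma Der_spanned:
  assumes \<eta>: "\<eta> \<in> Der v s q \<theta> \<phi>"
  shows "\<exists>c. (\<forall>i<r. c i \<in> tate_alg v s) \<and> bd_sub \<eta> (bd_lincomb q c \<delta> r) \<in> Der_si v s q \<theta> \<phi>"
proof -
  define B where "B = \<eta> (tconst \<theta>)"
  have B: "B \<in> tp_tau_carrier v s"
    unfolding B_def using Der_tp_tau_carrier[OF \<eta> tconst_theta_A_t] .
  obtain N where "\<And>n. N < n \<Longrightarrow> B n = tzero"
    using tp_carrier_degree[OF tp_tau_carrierD(1)[OF B]] by blast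
  then have "tp_degree_le B (r + N)"
    by (simp add: tp_degree_le_def)
  then obtain m where m: "m \<in> tp_tau_carrier v s" and deg: "tp_degree_le (tp_sub B (inner_theta m)) r"
    using inner_theta_reduce[OF B] by blast
  obtain c where c: "\<And>i. c i \<in> tate_alg v s"
    and c_theta: "bd_lincomb q c \<delta> r (tconst \<theta>) = tp_sub B (inner_theta m)"
    using bd_lincomb_theta_onto[OF tp_tau_carrier_tp_sub[OF B tp_tau_carrier_inner_theta[OF m]] deg]
    by blast
  have "bd_sub \<eta> (bd_lincomb q c \<delta> r) = inner_bider m"
  proof (rule Der_eq_if_theta)
    show "bd_sub \<eta> (bd_lincomb q c \<delta> r) \<in> Der v s q \<theta> \<phi>"
      using \<eta> c delta_in_Der by (intro Der_bd_sub Der_bd_lincomb)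
    show "inner_bider m \<in> Der v s q \<theta> \<phi>"
      using m by (rule Der_inner_bider)
    show "bd_sub \<eta> (bd_lincomb q c \<delta> r) (tconst \<theta>) = inner_bider m (tconst \<theta>)"
      by (simp add: bd_sub_def c_theta inner_bider_theta flip: B_def) (simp add: tp_sub_def)
  qed
  with m c show ?thesis
    by (auto simp: Der_si_iff)
qed

lemma bd_lincomb_Der_si_imp_zero:
  assumes c: "\<And>i. i < r \<Longrightarrow> c i \<in> tate_alg v s"
    and si: "bd_lincomb q c \<delta> r \<in> Der_si v s q \<theta> \<phi>" and i: "i < r"
  shows "c i = tzero"
proof -
  have lincomb: "bd_lincomb q c \<delta> r (tconst \<theta>) n \<alpha> =
      (if n = 0 then 0 else tmul (c 0) (phi_theta n) \<alpha> + (if n < r then c n \<alpha> else 0))" for n \<alpha>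
    using c by (intro bd_lincomb_theta tate_alg_finsupp_coeffs)
  obtain m where m: "m \<in> tp_tau_carrier v s" and eq: "bd_lincomb q c \<delta> r = inner_bider m"
    using si by (auto simp: Der_si_iff)
  have "inner_theta m n \<alpha> = 0" if "r < n" for n \<alpha>
    using lincomb[of n \<alpha>] that phi_theta_above_rank[OF that]
    by (simp add: eq inner_bider_theta)
  then have "tp_degree_le (inner_theta m) r"
    by (simp add: tp_degree_le_def fun_eq_iff)
  then have "m = tp_zero"
    using m by (intro inner_theta_degree_le_rank_imp_zero)
  then have zero: "bd_lincomb q c \<delta> r (tconst \<theta>) n \<alpha> = 0" for n \<alpha>
    by (simp add: eq inner_bider_theta inner_theta_tp_zero)
  have "tmul (c 0) (phi_theta r) \<alpha> = 0" for \<alpha>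
    using zero[of r \<alpha>] lincomb[of r \<alpha>] one_le_r by simp
  then have lead: "tmul (c 0) (phi_theta r) = tzero"
    by (simp add: fun_eq_iff)
  have "c 0 = tmul (c 0) (tmul g (phi_theta r))"
    using one_le_r c[of 0] by (simp add: g_inverse tmul_tone_right tate_alg_finsupp_coeffs)
  also have "\<dots> = tmul g (tmul (c 0) (phi_theta r))"
    by (rule tmul_left_commute)
  finally have c0: "c 0 = tzero"
    by (simp add: lead)
  have "c i \<alpha> = 0" if "0 < i" for \<alpha>
    using zero[of i \<alpha>] lincomb[of i \<alpha>] c0 i that by simp
  with c0 show ?thesis
    by (cases "i = 0") (simp_all add: fun_eq_iff)
qed

end

theorem corollary5p4:
  fixes v :: "'c::field \<Rightarrow> real" and p q s r :: nat and \<theta> :: 'c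
    and \<phi> :: "'c tate \<Rightarrow> 'c tpoly" and \<delta> :: "nat \<Rightarrow> 'c tate \<Rightarrow> 'c tpoly"
  assumes Cinf: "is_C_infinity p q \<theta> v"
    and drin: "drinfeld_module v s q \<theta> \<phi> r"
    and unit: "\<exists>g\<in>tate_alg v s. tmul g (\<phi> (tconst \<theta>) r) = tone"
    and d0: "\<delta> 0 = delta0 s q \<theta> \<phi>"
    and di: "\<And>i. 1 \<le> i \<Longrightarrow> i < r \<Longrightarrow>
               \<delta> i \<in> Der v s q \<theta> \<phi> \<and> \<delta> i (tconst \<theta>) = tp_tau_pow i"
  shows "(\<forall>i<r. \<delta> i \<in> Der v s q \<theta> \<phi>) \<and>
         (\<forall>\<eta>\<in>Der v s q \<theta> \<phi>. \<exists>c. (\<forall>i<r. c i \<in> tate_alg v s) \<and>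
             bd_sub \<eta> (bd_lincomb q c \<delta> r) \<in> Der_si v s q \<theta> \<phi>) \<and>
         (\<forall>c. (\<forall>i<r. c i \<in> tate_alg v s) \<and> bd_lincomb q c \<delta> r \<in> Der_si v s q \<theta> \<phi>
             \<longrightarrow> (\<forall>i<r. c i = tzero))"
proof -
  obtain e where "prime p" "CHAR('c) = p" "0 < e" "q = p ^ e"
    using Cinf by (auto simp: is_C_infinity_def)
  then have "frobenius_absval v q"
    using Cinf by unfold_locales
      (auto simp: is_C_infinity_def prime_gt_0_nat intro: freshmans_dream')
  moreover obtain g where "g \<in> tate_alg v s" "tmul g (\<phi> (tconst \<theta>) r) = tone"
    using unit by blast
  ultimately interpret drinfeld_de_Rham_basis v q s \<theta> \<phi> r g \<delta>
    using drin d0 di by unfold_locales (auto simp: frobenius_absval_def)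
  show ?thesis
    using delta_in_Der Der_spanned bd_lincomb_Der_si_imp_zero by blast
qed

end
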